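(* Let $d\ge2$, $0\le p<1$, let $X$ be a finite uniform $d$-complex and consider the $p$-lazy $(d-1)$-walk on $X$ starting at $\sigma_0\in X^{d-1}_\pm$. Then: (1) $A(X,p)=\frac{p(d-1)+1}{d}I-\frac{1-p}{d}\Delta^+$, and $\mathcal E_n^{\sigma_0}=A^n\mathcal E_0^{\sigma_0}=A^n\mathbb 1_{\sigma_0}$ for all $n\ge0$. (2) $\operatorname{Spec}A(X,p)\subseteq\big[2p-1,\frac{p(d-1)+1}{d}\big]$; the value $\frac{p(d-1)+1}{d}$ is an eigenvalue with eigenspace $Z^{d-1}$, and if $X$ is $(d-1)$-connected and disorientable then $2p-1$ is an eigenvalue, attained by $\partial_dF$ where $F\in\Omega^d$ is $1$ on a disorientation $X^d_+$ and $-1$ on the opposite orientations. (3) For all $n\ge0$, $$\frac{1}{\sqrt{K_{d-2}K_{d-1}}}\Big(\frac{p(d-1)+1}{d}\Big)^n\le\|\mathcal E_n^{\sigma_0}\|\le\max\Big(|2p-1|,\frac{p(d-1)+1}{d}\Big)^n,$$ where $K_j$ is the maximal degree of a $j$-cell of $X$ and $\|\cdot\|$ is the norm of the inner product on $\Omega^{d-1}$.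
   Context: A simplicial complex $X$ on a vertex set $V$ is a collection of finite subsets of $V$ (cells), closed under taking subsets (the empty set is a cell). A cell with $j+1$ elements is a $j$-cell; $X^j$ is the set of $j$-cells. $X$ is a $d$-complex if the maximal dimension of a cell is $d$; it is uniform if every cell lies in some $d$-cell. The degree $\deg\sigma$ of a $j$-cell $\sigma$ is the number of $(j+1)$-cells containing it. For $j\ge1$ each $j$-cell has two orientations (orderings of its vertices modulo even permutations), written $[v_0,\dots,v_j]$; $X^j_\pm$ is the set of oriented $j$-cells and $\bar\sigma$ denotes the opposite orientation. The oriented cell $[v_0,\dots,v_j]$ induces on its face $\{v_0,\dots,v_j\}\setminus\{v_i\}$ the orientation $(-1)^i[v_0,\dots,\widehat{v_i},\dots,v_j]$, where a factor $-1$ means reversing the orientation. For $v\notin\sigma$ write $v\triangleleft\sigma$ if $\sigma\cup\{v\}\in X$, and for oriented $\sigma=[\sigma_0,\dots,\sigma_k]$ let $v\sigma=[v,\sigma_0,\dots,\sigma_k]$. The space $\Omega^j=\Omega^j(X)$ of $j$-forms consists of the real functions $f$ on $X^j_\pm$ with $f(\bar\sigma)=-f(\sigma)$. For $\sigma\in X^{d-1}_\pm$, $\mathbb 1_\sigma\in\Omega^{d-1}$ is $1$ on $\sigma$, $-1$ on $\bar\sigma$, $0$ elsewhere. Two oriented $(d-1)$-cells are neighbours, $\sigma\sim\sigma'$, if some oriented $d$-cell $\tau$ has both $\sigma$ and $\overline{\sigma'}$ as faces with the orientations induced by $\tau$ (each $\sigma$ has $d\deg\sigma$ neighbours). Inner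 product on $\Omega^{d-1}$: $\langle f,g\rangle=\sum_{\sigma\in X^{d-1}}f(\sigma)g(\sigma)/\deg\sigma$. Boundary map $\partial_d:\Omega^d\to\Omega^{d-1}$: $(\partial_dF)(\sigma)=\sum_{v\triangleleft\sigma}F(v\sigma)$. Coboundary $\delta_d:\Omega^{d-1}\to\Omega^d$: $(\delta_df)([\tau_0,\dots,\tau_d])=\sum_{i=0}^d(-1)^if([\tau_0,\dots,\widehat{\tau_i},\dots,\tau_d])/\deg(\tau\setminus\tau_i)$. Upper Laplacian $\Delta^+=\partial_d\delta_d$: $(\Delta^+f)(\sigma)=f(\sigma)-\sum_{\sigma'\sim\sigma}f(\sigma')/\deg\sigma'$. Closed forms $Z^{d-1}=\ker\delta_d$. $p$-lazy $(d-1)$-walk ($0\le p<1$): the Markov chain on $X^{d-1}_\pm$ which from $\sigma$ stays at $\sigma$ with probability $p$ and moves to each neighbour $\sigma'\sim\sigma$ with probability $(1-p)/(d\deg\sigma)$. $\mathbf p_n^{\sigma_0}(\sigma)$ is the probability of being at $\sigma$ at time $n$ when starting at $\sigma_0$. Expectation process: $\mathcal E_n^{\sigma_0}\in\Omega^{d-1}$, $\mathcal E_n^{\sigma_0}(\sigma)=\mathbf p_n^{\sigma_0}(\sigma)-\mathbf p_n^{\sigma_0}(\bar\sigma)$. Transition operator $A=A(X,p)$ on $\Omega^{d-1}$: $(Af)(\sigma)=pf(\sigma)+\frac{1-p}{d}\sum_{\sigma'\sim\sigma}f(\sigma')/\deg\sigma'$. $X$ is $(d-1)$-connected if for all $\sigma,\sigma'\in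 X^{d-1}_\pm$ there is a chain $\sigma=\sigma_0\sim\dots\sim\sigma_n=\sigma'$. A disorientation is a choice $X^d_+$ of one orientation of each $d$-cell such that whenever two cells of $X^d_+$ intersect in a $(d-1)$-cell they induce the same orientation on it; $X$ is disorientable if it has one. *)

theory Defs
  imports Complex_Main "HOL-Combinatorics.Permutations"
begin

definition simplicial_complex :: "'a set set \<Rightarrow> bool" where
  "simplicial_complex X \<longleftrightarrow> {} \<in> X \<and> (\<forall>c\<in>X. finite c \<and> (\<forall>b. b \<subseteq> c \<longrightarrow> b \<in> X))"

definition cells :: "'a set set \<Rightarrow> nat \<Rightarrow> 'a set set" where
  "cells X j = {c \<in> X. card c = j + 1}"

definition is_d_complex :: "'a set set \<Rightarrow> nat \<Rightarrow> bool" where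
  "is_d_complex X d \<longleftrightarrow> simplicial_complex X \<and> (\<forall>c\<in>X. card c \<le> d + 1) \<and> cells X d \<noteq> {}"

definition uniform :: "'a set set \<Rightarrow> nat \<Rightarrow> bool" where
  "uniform X d \<longleftrightarrow> (\<forall>c\<in>X. \<exists>t\<in>cells X d. c \<subseteq> t)"

definition deg :: "'a set set \<Rightarrow> 'a set \<Rightarrow> nat" where
  "deg X c = card {t \<in> X. c \<subseteq> t \<and> card t = card c + 1}"

definition maxdeg :: "'a set set \<Rightarrow> nat \<Rightarrow> nat" where
  "maxdeg X j = Max (deg X ` cells X j)"

definition orderings :: "'a set set \<Rightarrow> nat \<Rightarrow> 'a list set" where
  "orderings X j = {xs. distinct xs \<and> length xs = j + 1 \<and> set xs \<in> X}"

text \<open>The orientation [v0,...,vj]: the class of the ordering modulo even permutations.\<close>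
definition oclass :: "'a list \<Rightarrow> 'a list set" where
  "oclass xs = {map q xs | q. q permutes set xs \<and> evenperm q}"

definition ocells :: "'a set set \<Rightarrow> nat \<Rightarrow> 'a list set set" where
  "ocells X j = oclass ` orderings X j"

definition orep :: "'a list set \<Rightarrow> 'a list" where
  "orep S = (SOME xs. xs \<in> S)"

definition ocell :: "'a list set \<Rightarrow> 'a set" where
  "ocell S = set (orep S)"

text \<open>Swapping the first two vertices (an odd permutation).\<close>
fun flip :: "'a list \<Rightarrow> 'a list" where
  "flip (a # b # r) = b # a # r"
| "flip xs = xs"

definition obar :: "'a list set \<Rightarrow> 'a list set" where
  "obar S = oclass (flip (orep S))"

definition del :: "nat \<Rightarrow> 'a list \<Rightarrow> 'a list" where
  "del i xs = take i xs @ drop (Suc i) xs"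

text \<open>Orientation induced by [v0,...,vj] on its face omitting v_i: (-1)^i [v0,..,^vi,..,vj].\<close>
definition ind_face :: "'a list \<Rightarrow> nat \<Rightarrow> 'a list set" where
  "ind_face xs i = (if even i then oclass (del i xs) else obar (oclass (del i xs)))"

definition nbr :: "'a set set \<Rightarrow> nat \<Rightarrow> 'a list set \<Rightarrow> 'a list set \<Rightarrow> bool" where
  "nbr X d S S' \<longleftrightarrow> S \<in> ocells X (d - 1) \<and> S' \<in> ocells X (d - 1) \<and>
     (\<exists>xs \<in> orderings X d. \<exists>i < d + 1. \<exists>k < d + 1. i \<noteq> k \<and>
        ind_face xs i = S \<and> ind_face xs k = obar S')"

text \<open>j-forms (with values in a real vector space; real-valued forms are the case 'b = real,
complex-valued ones are used to speak about the complex spectrum). Forms vanish off X^j_+-.\<close>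
definition forms :: "'a set set \<Rightarrow> nat \<Rightarrow> ('a list set \<Rightarrow> 'b::real_vector) set" where
  "forms X j = {f. (\<forall>S \<in> ocells X j. f (obar S) = - f S) \<and> (\<forall>S. S \<notin> ocells X j \<longrightarrow> f S = 0)}"

definition ind1 :: "'a list set \<Rightarrow> 'a list set \<Rightarrow> real" where
  "ind1 S0 S = (if S = S0 then 1 else if S = obar S0 then -1 else 0)"

definition fnorm :: "'a set set \<Rightarrow> nat \<Rightarrow> ('a list set \<Rightarrow> real) \<Rightarrow> real" where
  "fnorm X d f = sqrt (\<Sum>c \<in> cells X (d - 1).
      (f (oclass (SOME xs. distinct xs \<and> set xs = c)))\<^sup>2 / real (deg X c))"

definition Aop :: "'a set set \<Rightarrow> nat \<Rightarrow> real \<Rightarrow> ('a list set \<Rightarrow> 'b::real_vector) \<Rightarrow> 'a list set \<Rightarrow> 'b" where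
  "Aop X d p f S = (if S \<in> ocells X (d - 1) then
      p *\<^sub>R f S + ((1 - p) / real d) *\<^sub>R
        (\<Sum>S' \<in> {S'. nbr X d S S'}. (1 / real (deg X (ocell S'))) *\<^sub>R f S')
    else 0)"

definition Lup :: "'a set set \<Rightarrow> nat \<Rightarrow> ('a list set \<Rightarrow> real) \<Rightarrow> 'a list set \<Rightarrow> real" where
  "Lup X d f S = (if S \<in> ocells X (d - 1) then
      f S - (\<Sum>S' \<in> {S'. nbr X d S S'}. f S' / real (deg X (ocell S')))
    else 0)"

definition cobdry :: "'a set set \<Rightarrow> nat \<Rightarrow> ('a list set \<Rightarrow> real) \<Rightarrow> 'a list set \<Rightarrow> real" where
  "cobdry X d f T = (if T \<in> ocells X d then
      (\<Sum>i < d + 1. (-1) ^ i * f (oclass (del i (orep T))) / real (deg X (set (del i (orep T)))))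
    else 0)"

definition bdry :: "'a set set \<Rightarrow> nat \<Rightarrow> ('a list set \<Rightarrow> real) \<Rightarrow> 'a list set \<Rightarrow> real" where
  "bdry X d F S = (if S \<in> ocells X (d - 1) then
      (\<Sum>v \<in> {v. v \<notin> ocell S \<and> insert v (ocell S) \<in> X}. F (oclass (v # orep S)))
    else 0)"

definition closed_forms :: "'a set set \<Rightarrow> nat \<Rightarrow> ('a list set \<Rightarrow> real) set" where
  "closed_forms X d = {f \<in> forms X (d - 1). \<forall>T. cobdry X d f T = 0}"

definition connected_d1 :: "'a set set \<Rightarrow> nat \<Rightarrow> bool" where
  "connected_d1 X d \<longleftrightarrow> (\<forall>S \<in> ocells X (d - 1). \<forall>S' \<in> ocells X (d - 1). (nbr X d)\<^sup>*\<^sup>* S S')"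

text \<open>A disorientation: a choice D of one orientation of each d-cell, such that two chosen cells
meeting in a (d-1)-cell induce the same orientation on it.\<close>
definition disorientation :: "'a set set \<Rightarrow> nat \<Rightarrow> 'a list set set \<Rightarrow> bool" where
  "disorientation X d D \<longleftrightarrow> D \<subseteq> ocells X d \<and>
     (\<forall>xs \<in> orderings X d. (oclass xs \<in> D) \<noteq> (oclass (flip xs) \<in> D)) \<and>
     (\<forall>xs \<in> orderings X d. \<forall>ys \<in> orderings X d. oclass xs \<in> D \<longrightarrow> oclass ys \<in> D \<longrightarrow>
        set xs \<noteq> set ys \<longrightarrow> card (set xs \<inter> set ys) = d \<longrightarrow>
        (\<forall>i < d + 1. \<forall>k < d + 1. set (del i xs) = set xs \<inter> set ys \<longrightarrow>
            set (del k ys) = set xs \<inter> set ys \<longrightarrow> ind_face xs i = ind_face ys k))"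

definition disorientable :: "'a set set \<Rightarrow> nat \<Rightarrow> bool" where
  "disorientable X d \<longleftrightarrow> (\<exists>D. disorientation X d D)"

definition disor_form :: "'a set set \<Rightarrow> nat \<Rightarrow> 'a list set set \<Rightarrow> 'a list set \<Rightarrow> real" where
  "disor_form X d D T = (if T \<in> D then 1 else if T \<in> ocells X d then -1 else 0)"

definition trans_prob :: "'a set set \<Rightarrow> nat \<Rightarrow> real \<Rightarrow> 'a list set \<Rightarrow> 'a list set \<Rightarrow> real" where
  "trans_prob X d p S S' = (if S' = S then p
     else if nbr X d S S' then (1 - p) / (real d * real (deg X (ocell S))) else 0)"

fun walk_prob :: "'a set set \<Rightarrow> nat \<Rightarrow> real \<Rightarrow> 'a list set \<Rightarrow> nat \<Rightarrow> 'a list set \<Rightarrow> real" where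
  "walk_prob X d p S0 0 S = (if S = S0 then 1 else 0)"
| "walk_prob X d p S0 (Suc n) S' =
     (\<Sum>S \<in> ocells X (d - 1). walk_prob X d p S0 n S * trans_prob X d p S S')"

definition Eproc :: "'a set set \<Rightarrow> nat \<Rightarrow> real \<Rightarrow> 'a list set \<Rightarrow> nat \<Rightarrow> 'a list set \<Rightarrow> real" where
  "Eproc X d p S0 n S = (if S \<in> ocells X (d - 1)
     then walk_prob X d p S0 n S - walk_prob X d p S0 n (obar S) else 0)"

end

theory Submission
  imports Defs "HOL-Analysis.Convex"
begin

text \<open>
  The expectation process satisfies \<open>E(n+1) = A E(n)\<close>, where \<open>A = c I - k Lup\<close> with
  \<open>c = (p(d-1)+1)/d\<close> and \<open>k = (1-p)/d\<close>. For the degree-weighted inner product, Green's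
  formula \<open><Lup f, g> = \<Sum> (cobdry f) (cobdry g)\<close> (summed over the \<open>d\<close>-cells) makes \<open>Lup\<close>
  self-adjoint and positive semidefinite, and Cauchy-Schwarz over the \<open>d+1\<close> faces of a \<open>d\<close>-cell
  gives \<open><Lup f, f> \<le> (d+1) <f, f>\<close>. Hence the quadratic form of \<open>A\<close> lies between \<open>2p-1\<close> and
  \<open>c\<close>; this bounds the spectrum and, \<open>A\<close> being self-adjoint, the operator norm, which gives the
  upper bound. The \<open>c\<close>-eigenspace is \<open>ker Lup = ker cobdry\<close>. For the lower bound write
  \<open>S0 = [w, r]\<close> and pair \<open>E(n)\<close> with the closed form \<open>z\<close> that is \<open>\<plusminus>deg \<sigma>\<close> on the
  \<open>(d-1)\<close>-cells \<open>\<sigma>\<close> containing \<open>r\<close>: then \<open><E(n), z> = c\<^sup>n <ind1 S0, z> = c\<^sup>n\<close>, while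
  \<open><z, z> \<le> K(d-2) K(d-1)\<close>. Finally, for a disorientation \<open>D\<close> the boundary of the form \<open>\<plusminus>1\<close>
  on \<open>D\<close> is \<open>\<plusminus>deg \<sigma>\<close> with opposite signs on neighbouring cells, hence an eigenform for
  \<open>2p-1\<close>.
\<close>

section \<open>Parity of reorderings of a list\<close>

definition pos :: "'a list \<Rightarrow> 'a \<Rightarrow> nat" where
  "pos xs x = (THE i. i < length xs \<and> xs ! i = x)"

lemma pos_less_nth:
  "distinct xs \<Longrightarrow> x \<in> set xs \<Longrightarrow> pos xs x < length xs \<and> xs ! pos xs x = x"
  unfolding pos_def by (rule theI') (rule distinct_Ex1)

lemma pos_nth: "distinct xs \<Longrightarrow> i < length xs \<Longrightarrow> pos xs (xs ! i) = i"
  by (metis pos_less_nth nth_eq_iff_index_eq nth_mem)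

definition reordering :: "'a list \<Rightarrow> 'a list \<Rightarrow> bool" where
  "reordering xs ys \<longleftrightarrow> distinct xs \<and> distinct ys \<and> set xs = set ys"

definition reorder_perm :: "'a list \<Rightarrow> 'a list \<Rightarrow> 'a \<Rightarrow> 'a" where
  "reorder_perm xs ys x = (if x \<in> set xs then ys ! pos xs x else x)"

definition even_reordering :: "'a list \<Rightarrow> 'a list \<Rightarrow> bool" where
  "even_reordering xs ys \<longleftrightarrow> evenperm (reorder_perm xs ys)"

lemma reordering_sym: "reordering xs ys \<Longrightarrow> reordering ys xs"
  by (auto simp: reordering_def)

lemma reordering_trans: "reordering xs ys \<Longrightarrow> reordering ys zs \<Longrightarrow> reordering xs zs"
  by (auto simp: reordering_def)

lemma reordering_length: "reordering xs ys \<Longrightarrow> length ys = length xs"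
  unfolding reordering_def by (metis distinct_card)

lemma map_reorder_perm:
  "distinct xs \<Longrightarrow> length ys = length xs \<Longrightarrow> map (reorder_perm xs ys) xs = ys"
  by (auto intro!: nth_equalityI simp: reorder_perm_def pos_nth)

lemma reorder_perm_permutes:
  assumes "reordering xs ys"
  shows "reorder_perm xs ys permutes set xs"
proof (rule bij_imp_permutes)
  have xs: "distinct xs" and ys: "distinct ys" "set ys = set xs"
    using assms by (auto simp: reordering_def)
  have len: "length ys = length xs" using reordering_length[OF assms] .
  have "inj_on (reorder_perm xs ys) (set xs)"
  proof
    fix x y assume xy: "x \<in> set xs" "y \<in> set xs" "reorder_perm xs ys x = reorder_perm xs ys y"
    then have "ys ! pos xs x = ys ! pos xs y" by (simp add: reorder_perm_def)
    then have "pos xs x = pos xs y"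
      using pos_less_nth[OF xs] xy len nth_eq_iff_index_eq[OF ys(1)] by auto
    then show "x = y" using pos_less_nth[OF xs] xy by metis
  qed
  moreover have "reorder_perm xs ys ` set xs = set xs"
    using map_reorder_perm[OF xs len] ys(2) by (metis set_map)
  ultimately show "bij_betw (reorder_perm xs ys) (set xs) (set xs)" by (simp add: bij_betw_def)
qed (simp add: reorder_perm_def)

lemma permutes_eq_if_map_eq:
  assumes "q permutes set xs" "q' permutes set xs" "map q xs = map q' xs"
  shows "q = q'"
proof
  fix x show "q x = q' x"
    using assms by (cases "x \<in> set xs") (auto simp: permutes_not_in map_eq_conv)
qed

lemma reorder_perm_unique:
  assumes "reordering xs ys" "q permutes set xs" "map q xs = ys"
  shows "reorder_perm xs ys = q"
  using permutes_eq_if_map_eq[OF reorder_perm_permutes[OF assms(1)] assms(2)] assms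
    map_reorder_perm reordering_length by (metis reordering_def)

lemma even_reordering_trans:
  assumes "reordering xs ys" "reordering ys zs"
  shows "even_reordering xs zs \<longleftrightarrow> (even_reordering xs ys \<longleftrightarrow> even_reordering ys zs)"
proof -
  have p1: "reorder_perm xs ys permutes set xs" using reorder_perm_permutes[OF assms(1)] .
  have p2: "reorder_perm ys zs permutes set xs"
    using reorder_perm_permutes[OF assms(2)] assms(1) by (simp add: reordering_def)
  have "map (reorder_perm ys zs \<circ> reorder_perm xs ys) xs = zs"
    using map_reorder_perm reordering_length assms by (metis map_map reordering_def)
  then have "reorder_perm xs zs = reorder_perm ys zs \<circ> reorder_perm xs ys"
    using reorder_perm_unique permutes_compose[OF p1 p2] reordering_trans[OF assms] by metis
  moreover have "permutation (reorder_perm xs ys)" "permutation (reorder_perm ys zs)"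
    using p1 p2 permutation_permutes by auto
  ultimately show ?thesis unfolding even_reordering_def by (auto simp: evenperm_comp)
qed

lemma even_reordering_refl: "distinct xs \<Longrightarrow> even_reordering xs xs"
  using reorder_perm_unique[of xs xs id] by (simp add: reordering_def permutes_id even_reordering_def)

lemma even_reordering_sym:
  "reordering xs ys \<Longrightarrow> even_reordering ys xs \<longleftrightarrow> even_reordering xs ys"
  using even_reordering_trans[of xs ys xs] even_reordering_refl reordering_sym
  by (metis reordering_def)

lemma odd_reordering_transpose:
  assumes "distinct xs" "a \<in> set xs" "b \<in> set xs" "a \<noteq> b"
  shows "reordering xs (map (transpose a b) xs) \<and> \<not> even_reordering xs (map (transpose a b) xs)"
proof -
  have p: "transpose a b permutes set xs" using assms by (simp add: permutes_swap_id)
  have r: "reordering xs (map (transpose a b) xs)"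
    using p assms by (simp add: reordering_def distinct_map permutes_inj_on permutes_image)
  then have "reorder_perm xs (map (transpose a b) xs) = transpose a b"
    using reorder_perm_unique p by metis
  then show ?thesis using r assms by (simp add: even_reordering_def evenperm_swap)
qed

lemma move_to_front_parity:
  "distinct xs \<Longrightarrow> i < length xs \<Longrightarrow>
    reordering xs (xs ! i # del i xs) \<and> (even_reordering xs (xs ! i # del i xs) \<longleftrightarrow> even i)"
proof (induction i arbitrary: xs)
  case 0
  then show ?case by (cases xs) (auto simp: reordering_def del_def even_reordering_refl)
next
  case (Suc i)
  obtain as a b bs where xs: "xs = as @ a # b # bs" and li: "length as = i"
    using Suc.prems id_take_nth_drop[of "Suc i" xs] id_take_nth_drop[of i "take (Suc i) xs"]
    by (metis Cons_nth_drop_Suc Suc_lessD append_take_drop_id length_take min.absorb4)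
  let ?ys = "as @ b # a # bs"
  have dx: "distinct (as @ a # b # bs)" using Suc.prems(1) xs by simp
  have "map (transpose a b) xs = ?ys"
    using dx xs by (auto simp: transpose_def intro!: map_idI)
  then have odd: "reordering xs ?ys" "\<not> even_reordering xs ?ys"
    using odd_reordering_transpose[OF Suc.prems(1), of a b] dx xs by auto
  have front: "?ys ! i = xs ! Suc i" "del i ?ys = del (Suc i) xs"
    using li xs by (simp_all add: nth_append del_def)
  have "reordering ?ys (?ys ! i # del i ?ys) \<and> (even_reordering ?ys (?ys ! i # del i ?ys) \<longleftrightarrow> even i)"
  proof (rule Suc.IH)
    show "distinct ?ys" "i < length ?ys" using odd(1) li by (auto simp: reordering_def)
  qed
  then show ?case
    using front odd even_reordering_trans[OF odd(1)] reordering_trans[OF odd(1)] by simp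
qed

lemma even_reordering_Cons_cancel:
  assumes "distinct (v # a)" "distinct (v # b)" "set a = set b"
  shows "even_reordering (v # a) (v # b) \<longleftrightarrow> even_reordering a b"
proof -
  have r: "reordering a b" using assms by (auto simp: reordering_def)
  have p: "reorder_perm a b permutes set (v # a)"
    using permutes_subset[OF reorder_perm_permutes[OF r]] by auto
  have "map (reorder_perm a b) (v # a) = v # b"
    using map_reorder_perm[of a b] reordering_length[OF r] assms by (simp add: reorder_perm_def)
  then have "reorder_perm (v # a) (v # b) = reorder_perm a b"
    using reorder_perm_unique[OF _ p] assms by (simp add: reordering_def)
  then show ?thesis by (simp add: even_reordering_def)
qed

lemma del_even_reordering:
  assumes "reordering xs ys" "i < length xs" "j < length ys" "xs ! i = ys ! j"
  shows "reordering (del i xs) (del j ys)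
    \<and> (even_reordering (del i xs) (del j ys) \<longleftrightarrow> (even i \<longleftrightarrow> (even_reordering xs ys \<longleftrightarrow> even j)))"
proof -
  let ?x = "xs ! i"
  have dx: "distinct xs" "distinct ys" using assms by (auto simp: reordering_def)
  note A = move_to_front_parity[OF dx(1) assms(2)]
  note B = move_to_front_parity[OF dx(2) assms(3), folded assms(4)]
  have AB: "reordering (?x # del i xs) (?x # del j ys)"
    using A B assms(1) reordering_trans reordering_sym by blast
  have s: "set (del i xs) = set (del j ys)"
    using AB unfolding reordering_def by (metis Diff_insert_absorb distinct.simps(2) list.simps(15))
  have "even_reordering (?x # del i xs) (?x # del j ys)
      \<longleftrightarrow> (even i \<longleftrightarrow> (even_reordering xs ys \<longleftrightarrow> even j))"
    using A B assms(1) even_reordering_trans even_reordering_sym reordering_trans reordering_sym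
    by (smt (verit))
  moreover have "even_reordering (?x # del i xs) (?x # del j ys) \<longleftrightarrow> even_reordering (del i xs) (del j ys)"
    using even_reordering_Cons_cancel[OF _ _ s] AB by (auto simp: reordering_def)
  ultimately show ?thesis
    using AB s by (auto simp: reordering_def)
qed

lemma mem_oclass_iff:
  assumes "distinct xs"
  shows "ys \<in> oclass xs \<longleftrightarrow> reordering xs ys \<and> even_reordering xs ys"
proof
  assume "ys \<in> oclass xs"
  then obtain q where q: "ys = map q xs" "q permutes set xs" "evenperm q"
    unfolding oclass_def by blast
  then have r: "reordering xs ys"
    using assms by (simp add: reordering_def distinct_map permutes_inj_on permutes_image)
  then show "reordering xs ys \<and> even_reordering xs ys"
    using reorder_perm_unique q by (metis even_reordering_def)
next
  assume r: "reordering xs ys \<and> even_reordering xs ys"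
  then have "map (reorder_perm xs ys) xs = ys"
    using map_reorder_perm reordering_length assms by metis
  then show "ys \<in> oclass xs"
    unfolding oclass_def mem_Collect_eq
    using r reorder_perm_permutes[of xs ys] by (intro exI[of _ "reorder_perm xs ys"]) (simp add: even_reordering_def)
qed

lemma oclass_self: "distinct xs \<Longrightarrow> xs \<in> oclass xs"
  by (simp add: mem_oclass_iff even_reordering_refl reordering_def)

lemma oclass_eq_iff:
  assumes "distinct xs" "distinct ys"
  shows "oclass xs = oclass ys \<longleftrightarrow> set xs = set ys \<and> even_reordering xs ys"
proof
  assume "oclass xs = oclass ys"
  then show "set xs = set ys \<and> even_reordering xs ys"
    using oclass_self[OF assms(1)] mem_oclass_iff[OF assms(2)] even_reordering_sym
    by (metis reordering_def)
next
  assume h: "set xs = set ys \<and> even_reordering xs ys"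
  then have r: "reordering xs ys" using assms by (simp add: reordering_def)
  show "oclass xs = oclass ys"
    unfolding set_eq_iff mem_oclass_iff[OF assms(1)] mem_oclass_iff[OF assms(2)]
    using r h even_reordering_trans reordering_trans reordering_sym by metis
qed

lemma flip_flip [simp]: "flip (flip xs) = xs"
  by (induction xs rule: flip.induct) auto

lemma set_flip [simp]: "set (flip xs) = set xs"
  by (induction xs rule: flip.induct) auto

lemma distinct_flip [simp]: "distinct (flip xs) = distinct xs"
  by (induction xs rule: flip.induct) auto

lemma length_flip [simp]: "length (flip xs) = length xs"
  by (induction xs rule: flip.induct) auto

lemma odd_reordering_flip:
  assumes "distinct xs" "length xs \<ge> 2"
  shows "reordering xs (flip xs) \<and> \<not> even_reordering xs (flip xs)"
proof -
  obtain a b r where x: "xs = a # b # r"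
    using assms(2) by (metis Suc_le_length_iff numeral_2_eq_2)
  moreover have "map (transpose a b) r = r"
    using assms(1) x by (intro map_idI) (auto simp: transpose_def)
  ultimately have "flip xs = map (transpose a b) xs"
    by (simp add: transpose_def)
  then show ?thesis using odd_reordering_transpose[OF assms(1), of a b] x assms(1) by simp
qed

lemma even_reordering_flip_right:
  assumes "reordering xs ys" "length xs \<ge> 2"
  shows "reordering xs (flip ys) \<and> (even_reordering xs (flip ys) \<longleftrightarrow> \<not> even_reordering xs ys)"
  using odd_reordering_flip[of ys] assms reordering_length even_reordering_trans reordering_trans
  by (metis reordering_def)

lemma even_reordering_flip_left:
  assumes "reordering xs ys" "length xs \<ge> 2"
  shows "reordering (flip xs) ys \<and> (even_reordering (flip xs) ys \<longleftrightarrow> \<not> even_reordering xs ys)"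
  using even_reordering_flip_right[OF reordering_sym[OF assms(1)]] assms reordering_length
    even_reordering_sym reordering_sym by (metis le_trans order_refl)

lemma even_reordering_flip_both:
  assumes "reordering xs ys" "length xs \<ge> 2"
  shows "reordering (flip xs) (flip ys) \<and> (even_reordering (flip xs) (flip ys) \<longleftrightarrow> even_reordering xs ys)"
  using even_reordering_flip_right[OF conjunct1[OF even_reordering_flip_left[OF assms]]]
    even_reordering_flip_left[OF assms] assms(2) by simp

lemma orep_oclass: "distinct xs \<Longrightarrow> reordering xs (orep (oclass xs)) \<and> even_reordering xs (orep (oclass xs))"
  unfolding orep_def using someI[of "\<lambda>ys. ys \<in> oclass xs", OF oclass_self] mem_oclass_iff by blast

lemma oclass_orep: "distinct xs \<Longrightarrow> oclass (orep (oclass xs)) = oclass xs"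
  using orep_oclass oclass_eq_iff by (metis reordering_def)

lemma ocell_oclass: "distinct xs \<Longrightarrow> ocell (oclass xs) = set xs"
  unfolding ocell_def using orep_oclass by (metis reordering_def)

lemma obar_oclass:
  assumes "distinct xs" "length xs \<ge> 2"
  shows "obar (oclass xs) = oclass (flip xs)"
proof -
  let ?y = "orep (oclass xs)"
  have y: "reordering xs ?y" "even_reordering xs ?y" using orep_oclass[OF assms(1)] by auto
  have "reordering (flip ?y) (flip xs) \<and> (even_reordering (flip ?y) (flip xs) \<longleftrightarrow> even_reordering ?y xs)"
    using even_reordering_flip_both[OF reordering_sym[OF y(1)]] reordering_length[OF y(1)] assms(2)
    by simp
  then show ?thesis
    unfolding obar_def using oclass_eq_iff y even_reordering_sym by (metis reordering_def)
qed

lemma oclass_flip_neq: "distinct xs \<Longrightarrow> length xs \<ge> 2 \<Longrightarrow> oclass (flip xs) \<noteq> oclass xs"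
  using odd_reordering_flip oclass_eq_iff even_reordering_sym by (metis reordering_def)

definition signed_oclass :: "bool \<Rightarrow> 'a list \<Rightarrow> 'a list set" where
  "signed_oclass b xs = (if b then oclass xs else oclass (flip xs))"

lemma signed_oclass_eq_iff:
  assumes "reordering xs ys" "length xs \<ge> 2"
  shows "signed_oclass b xs = signed_oclass b' ys \<longleftrightarrow> (even_reordering xs ys \<longleftrightarrow> (b \<longleftrightarrow> b'))"
proof -
  have d: "distinct xs" "distinct ys" using assms(1) by (auto simp: reordering_def)
  have "oclass xs = oclass ys \<longleftrightarrow> even_reordering xs ys"
    using oclass_eq_iff d assms(1) by (auto simp: reordering_def)
  moreover have "oclass (flip xs) = oclass ys \<longleftrightarrow> \<not> even_reordering xs ys"
    using oclass_eq_iff[of "flip xs" ys] d even_reordering_flip_left[OF assms]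
    by (auto simp: reordering_def)
  moreover have "oclass xs = oclass (flip ys) \<longleftrightarrow> \<not> even_reordering xs ys"
    using oclass_eq_iff[of xs "flip ys"] d even_reordering_flip_right[OF assms]
    by (auto simp: reordering_def)
  moreover have "oclass (flip xs) = oclass (flip ys) \<longleftrightarrow> even_reordering xs ys"
    using oclass_eq_iff[of "flip xs" "flip ys"] d even_reordering_flip_both[OF assms]
    by (auto simp: reordering_def)
  ultimately show ?thesis unfolding signed_oclass_def by auto
qed

lemma obar_signed_oclass:
  "distinct xs \<Longrightarrow> length xs \<ge> 2 \<Longrightarrow> obar (signed_oclass b xs) = signed_oclass (\<not> b) xs"
  unfolding signed_oclass_def using obar_oclass[of xs] obar_oclass[of "flip xs"] by auto

lemma ocell_signed_oclass: "distinct xs \<Longrightarrow> ocell (signed_oclass b xs) = set xs"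
  unfolding signed_oclass_def by (auto simp: ocell_oclass)

lemma oclass_reordering_cases:
  assumes "reordering xs ys" "length xs \<ge> 2"
  shows "oclass ys = oclass xs \<or> oclass ys = obar (oclass xs)"
  using signed_oclass_eq_iff[OF assms, of _ True] obar_oclass[of xs] assms
  unfolding signed_oclass_def by (metis reordering_def)

lemma del_Cons_0 [simp]: "del 0 (v # s) = s"
  by (simp add: del_def)

lemma del_Cons_Suc [simp]: "del (Suc i) (v # s) = v # del i s"
  by (simp add: del_def)

lemma length_del: "i < length xs \<Longrightarrow> length (del i xs) = length xs - 1"
  by (simp add: del_def)

lemma distinct_del: "distinct xs \<Longrightarrow> distinct (del i xs)"
  unfolding del_def using set_take_disj_set_drop_if_distinct[of xs i "Suc i"] by simp

lemma set_del:
  assumes "distinct xs" "i < length xs"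
  shows "set (del i xs) = set xs - {xs ! i}"
proof -
  have d: "drop i xs = xs ! i # drop (Suc i) xs" using Cons_nth_drop_Suc[OF assms(2)] by simp
  have "distinct (take i xs @ drop i xs)" using assms(1) by simp
  then have "xs ! i \<notin> set (take i xs) \<union> set (drop (Suc i) xs)" unfolding d by auto
  moreover have "set xs = set (take i xs) \<union> insert (xs ! i) (set (drop (Suc i) xs))"
    by (metis d append_take_drop_id set_append list.set(2))
  ultimately show ?thesis unfolding del_def by auto
qed

lemma ind_face_signed:
  assumes "distinct xs" "length xs \<ge> 3" "i < length xs"
  shows "ind_face xs i = signed_oclass (even i) (del i xs)"
  using obar_oclass[OF distinct_del[OF assms(1)], of i] length_del[OF assms(3)] assms(2)
  unfolding ind_face_def signed_oclass_def by auto

lemma ind_face_reordering: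
  assumes "reordering xs ys" "length xs \<ge> 3" "i < length xs" "j < length ys" "xs ! i = ys ! j"
  shows "ind_face ys j = (if even_reordering xs ys then ind_face xs i else obar (ind_face xs i))"
proof -
  have dx: "distinct xs" "distinct ys" using assms by (auto simp: reordering_def)
  have fp: "reordering (del i xs) (del j ys)"
    "even_reordering (del i xs) (del j ys) \<longleftrightarrow> (even i \<longleftrightarrow> (even_reordering xs ys \<longleftrightarrow> even j))"
    using del_even_reordering[OF assms(1,3,4,5)] by auto
  have l2: "length (del i xs) \<ge> 2" using length_del[OF assms(3)] assms(2) by simp
  have ly: "length ys \<ge> 3" using reordering_length[OF assms(1)] assms(2) by simp
  have i: "ind_face xs i = signed_oclass (even i) (del i xs)"
    using ind_face_signed[OF dx(1) assms(2,3)] .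
  have j: "ind_face ys j = signed_oclass (even j) (del j ys)"
    using ind_face_signed[OF dx(2) ly assms(4)] .
  have o: "obar (ind_face xs i) = signed_oclass (odd i) (del i xs)"
    using i obar_signed_oclass[OF distinct_del[OF dx(1)] l2] by simp
  have "signed_oclass (even i) (del i xs) = signed_oclass (even j) (del j ys)"
    if "even_reordering xs ys"
    using signed_oclass_eq_iff[OF fp(1) l2] fp(2) that by simp
  moreover have "signed_oclass (odd i) (del i xs) = signed_oclass (even j) (del j ys)"
    if "\<not> even_reordering xs ys"
    using signed_oclass_eq_iff[OF fp(1) l2] fp(2) that by (cases "even i") auto
  ultimately show ?thesis using i j o by simp
qed

definition opp_face :: "'a list \<Rightarrow> 'a \<Rightarrow> 'a list set" where
  "opp_face xs x = ind_face xs (pos xs x)"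

lemma ind_face_eq_opp_face: "distinct xs \<Longrightarrow> i < length xs \<Longrightarrow> ind_face xs i = opp_face xs (xs ! i)"
  by (simp add: opp_face_def pos_nth)

lemma opp_face_reordering:
  assumes "reordering xs ys" "length xs \<ge> 3" "x \<in> set xs"
  shows "opp_face ys x = (if even_reordering xs ys then opp_face xs x else obar (opp_face xs x))"
proof -
  have dx: "distinct xs" "distinct ys" "set xs = set ys" using assms by (auto simp: reordering_def)
  show ?thesis unfolding opp_face_def
    using ind_face_reordering[OF assms(1,2)] pos_less_nth[OF dx(1) assms(3)] pos_less_nth[OF dx(2)]
      assms(3) dx(3) by metis
qed

lemma opp_face_signed:
  assumes "distinct xs" "length xs \<ge> 3" "x \<in> set xs"
  shows "opp_face xs x = signed_oclass (even (pos xs x)) (del (pos xs x) xs)"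
  using ind_face_signed[OF assms(1,2)] pos_less_nth[OF assms(1,3)] unfolding opp_face_def by auto

lemma ocell_opp_face:
  assumes "distinct xs" "length xs \<ge> 3" "x \<in> set xs"
  shows "ocell (opp_face xs x) = set xs - {x}"
  using opp_face_signed[OF assms] ocell_signed_oclass[OF distinct_del[OF assms(1)]]
    set_del[OF assms(1)] pos_less_nth[OF assms(1,3)] by simp

lemma opp_face_Cons_hd:
  assumes "distinct (v # s)" "length s \<ge> 2"
  shows "opp_face (v # s) v = oclass s"
  using opp_face_signed[OF assms(1)] pos_nth[OF assms(1), of 0] assms(2)
  by (simp add: signed_oclass_def)

lemma opp_face_Cons_second:
  assumes "distinct (a # b # r)" "length r \<ge> 1"
  shows "opp_face (a # b # r) b = obar (oclass (a # r))"
  using opp_face_signed[OF assms(1)] pos_nth[OF assms(1), of 1] assms obar_oclass[of "a # r"]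
  by (simp add: signed_oclass_def del_def)

lemma ocellsE:
  assumes "S \<in> ocells X j"
  obtains xs where "xs \<in> orderings X j" "S = oclass xs"
  using assms unfolding ocells_def by auto

lemma oclass_in_ocells: "xs \<in> orderings X j \<Longrightarrow> oclass xs \<in> ocells X j"
  unfolding ocells_def by auto

lemma flip_in_orderings: "xs \<in> orderings X j \<Longrightarrow> flip xs \<in> orderings X j"
  by (simp add: orderings_def)

lemma orep_in_orderings:
  assumes "S \<in> ocells X j"
  shows "orep S \<in> orderings X j \<and> oclass (orep S) = S"
proof -
  obtain xs where xs: "xs \<in> orderings X j" "S = oclass xs" using ocellsE[OF assms] .
  have d: "distinct xs" using xs(1) by (simp add: orderings_def)
  have r: "reordering xs (orep S)" using orep_oclass[OF d] xs(2) by simp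
  have "orep S \<in> orderings X j"
    using xs(1) r reordering_length[OF r] by (simp add: orderings_def reordering_def)
  moreover have "oclass (orep S) = S" using oclass_orep[OF d] xs(2) by simp
  ultimately show ?thesis ..
qed

lemma ocell_in_cells: "S \<in> ocells X j \<Longrightarrow> ocell S \<in> cells X j"
  using orep_in_orderings unfolding ocell_def orderings_def cells_def by (auto simp: distinct_card)

lemma obar_ocells:
  assumes "S \<in> ocells X j" "j \<ge> 1"
  shows "obar S \<in> ocells X j \<and> obar (obar S) = S \<and> obar S \<noteq> S \<and> ocell (obar S) = ocell S"
proof -
  obtain xs where xs: "xs \<in> orderings X j" "S = oclass xs" using ocellsE[OF assms(1)] .
  have d: "distinct xs" "length xs \<ge> 2" using xs assms(2) by (auto simp: orderings_def)
  have o: "obar S = oclass (flip xs)" using obar_oclass d xs by simp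
  have "obar S \<in> ocells X j" using o oclass_in_ocells[OF flip_in_orderings[OF xs(1)]] by simp
  moreover have "obar (obar S) = S" using o xs d obar_oclass[of "flip xs"] by simp
  moreover have "obar S \<noteq> S" using o xs oclass_flip_neq d by simp
  moreover have "ocell (obar S) = ocell S" using o xs d ocell_oclass[of xs] ocell_oclass[of "flip xs"] by simp
  ultimately show ?thesis by blast
qed

lemma ocells_same_ocell:
  assumes "S \<in> ocells X j" "S' \<in> ocells X j" "j \<ge> 1" "ocell S = ocell S'"
  shows "S' = S \<or> S' = obar S"
proof -
  obtain xs where xs: "xs \<in> orderings X j" "S = oclass xs" using ocellsE[OF assms(1)] .
  obtain ys where ys: "ys \<in> orderings X j" "S' = oclass ys" using ocellsE[OF assms(2)] .
  have "reordering xs ys" using xs ys assms(4) ocell_oclass by (auto simp: orderings_def reordering_def)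
  moreover have "length xs \<ge> 2" using xs assms(3) by (auto simp: orderings_def)
  ultimately show ?thesis using oclass_reordering_cases xs ys by blast
qed

lemma subset_cell: "simplicial_complex X \<Longrightarrow> c \<in> X \<Longrightarrow> b \<subseteq> c \<Longrightarrow> b \<in> X"
  by (simp add: simplicial_complex_def)

lemma del_in_orderings:
  assumes "simplicial_complex X" "xs \<in> orderings X j" "i < length xs" "j \<ge> 1"
  shows "del i xs \<in> orderings X (j - 1)"
proof -
  have "set (del i xs) \<subseteq> set xs"
    unfolding del_def using set_take_subset set_drop_subset by (metis le_supI set_append)
  then have "set (del i xs) \<in> X"
    using subset_cell[OF assms(1)] assms(2) by (auto simp: orderings_def)
  moreover have "length (del i xs) = Suc (j - 1)"
    using length_del[OF assms(3)] assms(2,4) by (simp add: orderings_def)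
  ultimately show ?thesis using assms(2) distinct_del[of xs i] by (simp add: orderings_def)
qed

lemma signed_oclass_in_ocells: "xs \<in> orderings X j \<Longrightarrow> signed_oclass b xs \<in> ocells X j"
  unfolding signed_oclass_def by (simp add: oclass_in_ocells flip_in_orderings)

lemma opp_face_in_ocells:
  assumes "simplicial_complex X" "xs \<in> orderings X j" "j \<ge> 2" "x \<in> set xs"
  shows "opp_face xs x \<in> ocells X (j - 1)"
proof -
  have d: "distinct xs" "length xs \<ge> 3" using assms by (auto simp: orderings_def)
  have "del (pos xs x) xs \<in> orderings X (j - 1)"
    using del_in_orderings[OF assms(1,2)] pos_less_nth[OF d(1) assms(4)] assms(3) by simp
  then show ?thesis
    by (simp add: opp_face_signed[OF d assms(4)] signed_oclass_in_ocells)
qed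

definition canon :: "'a set \<Rightarrow> 'a list" where
  "canon c = (SOME xs. distinct xs \<and> set xs = c)"

definition canon_ocell :: "'a set \<Rightarrow> 'a list set" where
  "canon_ocell c = oclass (canon c)"

lemma canon: "finite c \<Longrightarrow> distinct (canon c) \<and> set (canon c) = c"
  unfolding canon_def by (rule someI_ex) (metis finite_distinct_list)

lemma finite_cell: "simplicial_complex X \<Longrightarrow> c \<in> X \<Longrightarrow> finite c"
  by (auto simp: simplicial_complex_def)

lemma canon_in_orderings:
  assumes "simplicial_complex X" "c \<in> cells X j"
  shows "canon c \<in> orderings X j \<and> set (canon c) = c"
proof -
  have "finite c" using assms finite_cell by (auto simp: cells_def)
  then have "distinct (canon c)" "set (canon c) = c" using canon by auto
  then show ?thesis using assms(2) distinct_card[of "canon c"] by (auto simp: orderings_def cells_def)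
qed

lemma canon_ocell_in_ocells:
  assumes "simplicial_complex X" "c \<in> cells X j"
  shows "canon_ocell c \<in> ocells X j \<and> ocell (canon_ocell c) = c"
  using canon_in_orderings[OF assms] oclass_in_ocells[of "canon c"] ocell_oclass[of "canon c"]
  by (auto simp: canon_ocell_def orderings_def)

lemma ocell_canon_cases:
  assumes "simplicial_complex X" "S \<in> ocells X j" "j \<ge> 1"
  shows "S = canon_ocell (ocell S) \<or> S = obar (canon_ocell (ocell S))"
proof -
  have "canon_ocell (ocell S) \<in> ocells X j" "ocell (canon_ocell (ocell S)) = ocell S"
    using canon_ocell_in_ocells[OF assms(1) ocell_in_cells[OF assms(2)]] by auto
  then show ?thesis using ocells_same_ocell[OF _ assms(2,3)] by metis
qed

definition link_vertices :: "'a set set \<Rightarrow> 'a set \<Rightarrow> 'a set" where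
  "link_vertices X c = {v. v \<notin> c \<and> insert v c \<in> X}"

lemma finite_link_vertices: "finite X \<Longrightarrow> simplicial_complex X \<Longrightarrow> finite (link_vertices X c)"
  by (rule finite_subset[of _ "\<Union>X"]) (auto simp: link_vertices_def finite_cell)

lemma deg_eq_card_link_vertices:
  assumes "finite c"
  shows "deg X c = card (link_vertices X c)"
proof -
  have "{t \<in> X. c \<subseteq> t \<and> card t = card c + 1} = (\<lambda>v. insert v c) ` link_vertices X c"
  proof (intro subset_antisym subsetI)
    fix t assume t: "t \<in> {t \<in> X. c \<subseteq> t \<and> card t = card c + 1}"
    then have "finite t" by (auto intro: card_ge_0_finite)
    then have "card (t - c) = 1" using t assms by (simp add: card_Diff_subset)
    then obtain v where "t - c = {v}" by (rule card_1_singletonE)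
    then have "t = insert v c" "v \<notin> c" using t by auto
    then show "t \<in> (\<lambda>v. insert v c) ` link_vertices X c"
      using t by (auto simp: link_vertices_def intro!: image_eqI[of _ _ v])
  qed (use assms in \<open>auto simp: link_vertices_def\<close>)
  moreover have "inj_on (\<lambda>v. insert v c) (link_vertices X c)"
    by (auto simp: link_vertices_def inj_on_def)
  ultimately show ?thesis unfolding deg_def by (simp add: card_image)
qed

lemma sum_cells_Suc_flags:
  assumes "simplicial_complex X" "finite X"
  shows "(\<Sum>t\<in>cells X (Suc j). \<Sum>x\<in>t. h t x) = (\<Sum>c\<in>cells X j. \<Sum>v\<in>link_vertices X c. h (insert v c) v)"
proof -
  let ?L = "Sigma (cells X (Suc j)) (\<lambda>t. t)"
  let ?R = "Sigma (cells X j) (link_vertices X)"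
  have "(\<Sum>(t, x)\<in>?L. h t x) = (\<Sum>(c, v)\<in>?R. h (insert v c) v)"
  proof (rule sum.reindex_bij_witness[of _ "\<lambda>(c, v). (insert v c, v)" "\<lambda>(t, x). (t - {x}, x)"])
    fix a assume "a \<in> ?R"
    then obtain c v where a: "a = (c, v)" "c \<in> cells X j" "v \<in> link_vertices X c" by auto
    then have "finite c" using assms finite_cell by (auto simp: cells_def)
    then show "(\<lambda>(c, v). (insert v c, v)) a \<in> ?L"
      using a by (auto simp: cells_def link_vertices_def)
    show "(\<lambda>(t, x). (t - {x}, x)) ((\<lambda>(c, v). (insert v c, v)) a) = a"
      using a by (auto simp: link_vertices_def)
  next
    fix b assume "b \<in> ?L"
    then obtain t x where b: "b = (t, x)" "t \<in> cells X (Suc j)" "x \<in> t" by auto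
    then have "finite t" using assms finite_cell by (auto simp: cells_def)
    then show "(\<lambda>(t, x). (t - {x}, x)) b \<in> ?R"
      using b subset_cell[OF assms(1), of t "t - {x}"]
      by (auto simp: cells_def link_vertices_def insert_absorb)
    show "(\<lambda>(c, v). (insert v c, v)) ((\<lambda>(t, x). (t - {x}, x)) b) = b"
      using b by auto
  qed (auto simp: insert_absorb)
  moreover have "(\<Sum>t\<in>cells X (Suc j). \<Sum>x\<in>t. h t x) = (\<Sum>(t, x)\<in>?L. h t x)"
    using assms by (intro sum.Sigma) (auto simp: cells_def finite_cell)
  moreover have "(\<Sum>c\<in>cells X j. \<Sum>v\<in>link_vertices X c. h (insert v c) v)
      = (\<Sum>(c, v)\<in>?R. h (insert v c) v)"
    using assms by (intro sum.Sigma) (auto simp: cells_def finite_link_vertices)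
  ultimately show ?thesis by simp
qed

abbreviation top_eigenvalue :: "nat \<Rightarrow> real \<Rightarrow> real" where
  "top_eigenvalue d p \<equiv> (p * (real d - 1) + 1) / real d"

locale uniform_complex =
  fixes X :: "'a set set" and d :: nat
  assumes simplicial: "simplicial_complex X" and finite_X: "finite X"
    and d_ge_2: "d \<ge> 2" and uniform: "uniform X d"
begin

abbreviation "OC \<equiv> ocells X (d - 1)"
abbreviation "C \<equiv> cells X (d - 1)"
abbreviation "T \<equiv> cells X d"
abbreviation "N S \<equiv> {S'. nbr X d S S'}"

lemma finite_C: "finite C" and finite_T: "finite T"
  using finite_X by (simp_all add: cells_def)

lemma finite_orderings: "finite (orderings X j)"
proof -
  have "orderings X j \<subseteq> {xs. set xs \<subseteq> \<Union>X \<and> length xs = Suc j}"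
    by (auto simp: orderings_def)
  moreover have "finite (\<Union>X)" using finite_X finite_cell[OF simplicial] by auto
  ultimately show ?thesis using finite_lists_length_eq finite_subset by blast
qed

lemma finite_OC: "finite OC"
  unfolding ocells_def using finite_orderings by simp

lemma obar_OC: "S \<in> OC \<Longrightarrow> obar S \<in> OC \<and> obar (obar S) = S \<and> obar S \<noteq> S \<and> ocell (obar S) = ocell S"
  using obar_ocells[of S X "d - 1"] d_ge_2 by simp

lemma obar_eq_iff:
  assumes "S \<in> OC" "S' \<in> OC"
  shows "obar S = S' \<longleftrightarrow> S = obar S'"
proof
  assume "obar S = S'" then show "S = obar S'" using obar_OC[OF assms(1)] by auto
next
  assume "S = obar S'" then show "obar S = S'" using obar_OC[OF assms(2)] by auto
qed

lemma orep_ocell: "S \<in> OC \<Longrightarrow> set (orep S) = ocell S"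
  by (simp add: ocell_def)

lemma orep_OC: "S \<in> OC \<Longrightarrow> orep S \<in> orderings X (d - 1)"
  and oclass_orep_OC: "S \<in> OC \<Longrightarrow> oclass (orep S) = S"
  using orep_in_orderings[of S X "d - 1"] by simp_all

lemma deg_pos:
  assumes "c \<in> C"
  shows "deg X c > 0"
proof -
  obtain t where t: "t \<in> T" "c \<subseteq> t" using uniform assms unfolding uniform_def cells_def by blast
  then have "t \<in> {t \<in> X. c \<subseteq> t \<and> card t = card c + 1}" using assms d_ge_2 by (simp add: cells_def)
  moreover have "finite {t \<in> X. c \<subseteq> t \<and> card t = card c + 1}" using finite_X by simp
  ultimately show ?thesis unfolding deg_def using card_gt_0_iff by blast
qed

lemma Cons_in_orderings:
  "s \<in> orderings X (d - 1) \<Longrightarrow> v \<in> link_vertices X (set s) \<Longrightarrow> v # s \<in> orderings X d"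
  using d_ge_2 by (auto simp: orderings_def link_vertices_def)

lemma card_link_vertices: "c \<in> C \<Longrightarrow> card (link_vertices X c) = deg X c"
  using deg_eq_card_link_vertices[of c X] finite_cell[OF simplicial, of c] by (simp add: cells_def)

lemma link_vertices_nonempty: "c \<in> C \<Longrightarrow> link_vertices X c \<noteq> {}"
  using card_link_vertices deg_pos by fastforce

lemma opp_face_in_OC: "xs \<in> orderings X d \<Longrightarrow> x \<in> set xs \<Longrightarrow> opp_face xs x \<in> OC"
  using opp_face_in_ocells[OF simplicial _ d_ge_2] by blast

lemma ocell_opp_face_top: "xs \<in> orderings X d \<Longrightarrow> x \<in> set xs \<Longrightarrow> ocell (opp_face xs x) = set xs - {x}"
  using ocell_opp_face[of xs x] d_ge_2 by (simp add: orderings_def)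

lemma ind_faces_iff_opp_faces:
  assumes xs: "xs \<in> orderings X d"
  shows "(\<exists>i<d + 1. \<exists>k<d + 1. i \<noteq> k \<and> ind_face xs i = S \<and> ind_face xs k = S')
    \<longleftrightarrow> (\<exists>v\<in>set xs. \<exists>w\<in>set xs. v \<noteq> w \<and> opp_face xs v = S \<and> opp_face xs w = S')"
    (is "?ind \<longleftrightarrow> ?opp")
proof -
  have dx: "distinct xs" "length xs = d + 1" using xs by (auto simp: orderings_def)
  show ?thesis
  proof
    assume ?ind
    then obtain i k where ik: "i < d + 1" "k < d + 1" "i \<noteq> k" "ind_face xs i = S" "ind_face xs k = S'"
      by blast
    have "xs ! i \<in> set xs" "xs ! k \<in> set xs" "xs ! i \<noteq> xs ! k"
      using ik dx nth_eq_iff_index_eq[OF dx(1)] by auto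
    moreover have "opp_face xs (xs ! i) = S" "opp_face xs (xs ! k) = S'"
      using ik dx ind_face_eq_opp_face[OF dx(1)] by auto
    ultimately show ?opp by blast
  next
    assume ?opp
    then obtain v w where vw: "v \<in> set xs" "w \<in> set xs" "v \<noteq> w" "opp_face xs v = S" "opp_face xs w = S'"
      by blast
    have "pos xs v < d + 1" "pos xs w < d + 1" "pos xs v \<noteq> pos xs w"
      using pos_less_nth[OF dx(1) vw(1)] pos_less_nth[OF dx(1) vw(2)] dx(2) vw(3) by metis+
    moreover have "ind_face xs (pos xs v) = S" "ind_face xs (pos xs w) = S'"
      using vw by (simp_all add: opp_face_def)
    ultimately show ?ind by blast
  qed
qed

lemma nbr_iff_opp_face:
  "nbr X d S S' \<longleftrightarrow> S \<in> OC \<and> S' \<in> OC \<and> (\<exists>xs\<in>orderings X d. \<exists>v\<in>set xs. \<exists>w\<in>set xs.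
      v \<noteq> w \<and> opp_face xs v = S \<and> opp_face xs w = obar S')"
  unfolding nbr_def using ind_faces_iff_opp_faces[of _ S "obar S'"] by blast

lemma nbr_OC: "nbr X d S S' \<Longrightarrow> S \<in> OC \<and> S' \<in> OC"
  by (simp add: nbr_def)

lemma ocell_nbr_face:
  assumes "s \<in> orderings X (d - 1)" "v \<in> link_vertices X (set s)" "x \<in> set s"
  shows "opp_face (v # s) x \<in> OC" and "obar (opp_face (v # s) x) \<in> OC"
    and "ocell (obar (opp_face (v # s) x)) = insert v (set s - {x})"
proof -
  have o: "v # s \<in> orderings X d" using Cons_in_orderings assms by blast
  show f: "opp_face (v # s) x \<in> OC" using opp_face_in_OC[OF o] assms(3) by simp
  then show "obar (opp_face (v # s) x) \<in> OC" using obar_OC by blast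
  show "ocell (obar (opp_face (v # s) x)) = insert v (set s - {x})"
    using obar_OC[OF f] ocell_opp_face_top[OF o] assms(2,3) by (auto simp: link_vertices_def)
qed

lemma nbr_oclass_Cons:
  assumes s: "s \<in> orderings X (d - 1)" and v: "v \<in> link_vertices X (set s)" and x: "x \<in> set s"
  shows "nbr X d (oclass s) (obar (opp_face (v # s) x))"
proof -
  have o: "v # s \<in> orderings X d" using Cons_in_orderings s v by blast
  have ds: "distinct (v # s)" "length s = d" using o d_ge_2 by (auto simp: orderings_def)
  have "opp_face (v # s) v = oclass s" using opp_face_Cons_hd[of v s] ds d_ge_2 by simp
  moreover have "opp_face (v # s) x = obar (obar (opp_face (v # s) x))"
    using obar_OC ocell_nbr_face[OF s v x] by blast
  moreover have "v \<noteq> x" "v \<in> set (v # s)" "x \<in> set (v # s)"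
    using v x by (auto simp: link_vertices_def)
  ultimately show ?thesis
    unfolding nbr_iff_opp_face using o ocell_nbr_face[OF s v x] oclass_in_ocells[OF s] by blast
qed

lemma nbr_oclassE:
  assumes s: "s \<in> orderings X (d - 1)" and n: "nbr X d (oclass s) S'"
  obtains v x where "v \<in> link_vertices X (set s)" "x \<in> set s" "S' = obar (opp_face (v # s) x)"
proof -
  obtain xs v w where xs: "xs \<in> orderings X d" "v \<in> set xs" "w \<in> set xs" "v \<noteq> w"
    "opp_face xs v = oclass s" "opp_face xs w = obar S'" and S': "S' \<in> OC"
    using n unfolding nbr_iff_opp_face by blast
  have dx: "distinct xs" "length xs \<ge> 3" using xs(1) d_ge_2 by (auto simp: orderings_def)
  have ds: "distinct s" using s by (simp add: orderings_def)
  have ss: "set s = set xs - {v}"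
    using ocell_opp_face_top[OF xs(1,2)] xs(5) ocell_oclass[OF ds] by simp
  have r: "reordering xs (v # s)" using ss ds dx xs(2) by (auto simp: reordering_def)
  have "length s \<ge> 2" using s d_ge_2 by (simp add: orderings_def)
  then have "opp_face (v # s) v = oclass s"
    using opp_face_Cons_hd[of v s] ds ss by simp
  then have even: "even_reordering xs (v # s)"
    using opp_face_reordering[OF r dx(2) xs(2)] xs(5) obar_OC[OF oclass_in_ocells[OF s]]
    by (cases "even_reordering xs (v # s)") auto
  have "opp_face (v # s) w = obar S'" using opp_face_reordering[OF r dx(2) xs(3)] even xs(6) by simp
  then have "S' = obar (opp_face (v # s) w)" using obar_OC[OF S'] by simp
  moreover have "v \<in> link_vertices X (set s)"
    using ss xs(1,2) by (auto simp: link_vertices_def orderings_def insert_absorb)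
  moreover have "w \<in> set s" using ss xs(3,4) by simp
  ultimately show ?thesis using that by blast
qed

lemma nbr_oclass_eq_image:
  assumes s: "s \<in> orderings X (d - 1)"
  shows "N (oclass s) = (\<lambda>(v, x). obar (opp_face (v # s) x)) ` (link_vertices X (set s) \<times> set s)"
proof (intro subset_antisym subsetI)
  fix S' assume "S' \<in> N (oclass s)"
  then obtain v x where "v \<in> link_vertices X (set s)" "x \<in> set s" "S' = obar (opp_face (v # s) x)"
    using nbr_oclassE[OF s] by blast
  then show "S' \<in> (\<lambda>(v, x). obar (opp_face (v # s) x)) ` (link_vertices X (set s) \<times> set s)"
    by (auto intro!: image_eqI[of _ _ "(v, x)"])
qed (use nbr_oclass_Cons[OF s] in auto)

lemma inj_on_nbr_faces:
  assumes s: "s \<in> orderings X (d - 1)"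
  shows "inj_on (\<lambda>(v, x). obar (opp_face (v # s) x)) (link_vertices X (set s) \<times> set s)"
proof (rule inj_onI, clarify)
  fix v x w y
  assume v: "v \<in> link_vertices X (set s)" "x \<in> set s" and w: "w \<in> link_vertices X (set s)" "y \<in> set s"
    and "obar (opp_face (v # s) x) = obar (opp_face (w # s) y)"
  then have e: "insert v (set s - {x}) = insert w (set s - {y})"
    using ocell_nbr_face(3)[OF s] by metis
  have nv: "v \<notin> set s" "w \<notin> set s" using v w by (auto simp: link_vertices_def)
  then have "v = w" using e by blast
  then have "set s - {x} = set s - {y}"
    using e nv insert_ident[of v "set s - {x}" "set s - {y}"] by simp
  then show "v = w \<and> x = y" using \<open>v = w\<close> v(2) w(2) by blast
qed

lemma sum_nbr:
  assumes s: "s \<in> orderings X (d - 1)"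
  shows "(\<Sum>S'\<in>N (oclass s). \<phi> S') = (\<Sum>v\<in>link_vertices X (set s). \<Sum>x\<in>set s. \<phi> (obar (opp_face (v # s) x)))"
  unfolding nbr_oclass_eq_image[OF s] sum.reindex[OF inj_on_nbr_faces[OF s]]
  by (simp add: sum.cartesian_product split_beta)

lemma card_nbr:
  assumes S: "S \<in> OC"
  shows "card (N S) = d * deg X (ocell S)"
proof -
  have s: "orep S \<in> orderings X (d - 1)" "oclass (orep S) = S" using orep_in_orderings[OF S] by auto
  have "card (N S) = card (link_vertices X (set (orep S)) \<times> set (orep S))"
    using card_image[OF inj_on_nbr_faces[OF s(1)]] nbr_oclass_eq_image[OF s(1)] s(2) by simp
  also have "\<dots> = deg X (ocell S) * d"
    using card_link_vertices ocell_in_cells[OF S] s(1) d_ge_2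
    by (simp add: card_cartesian_product ocell_def orderings_def distinct_card)
  finally show ?thesis by simp
qed

lemma nbr_irrefl: "\<not> nbr X d S S"
proof
  assume n: "nbr X d S S"
  then obtain s where s: "s \<in> orderings X (d - 1)" "S = oclass s"
    using nbr_OC ocellsE by metis
  then obtain v x where vx: "v \<in> link_vertices X (set s)" "x \<in> set s" "S = obar (opp_face (v # s) x)"
    using n nbr_oclassE by metis
  have "ocell S = set s" using s ocell_oclass by (auto simp: orderings_def)
  then show False using ocell_nbr_face(3)[OF s(1) vx(1,2)] vx by (auto simp: link_vertices_def)
qed

lemma nbr_sym:
  assumes "nbr X d S S'"
  shows "nbr X d S' S \<and> nbr X d (obar S) (obar S')"
proof -
  obtain xs v w where xs: "xs \<in> orderings X d" "v \<in> set xs" "w \<in> set xs" "v \<noteq> w"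
    "opp_face xs v = S" "opp_face xs w = obar S'" and S: "S \<in> OC" "S' \<in> OC"
    using assms unfolding nbr_iff_opp_face by blast
  have dx: "distinct xs" "length xs \<ge> 3" using xs(1) d_ge_2 by (auto simp: orderings_def)
  have r: "reordering xs (flip xs)" "\<not> even_reordering xs (flip xs)"
    using odd_reordering_flip[OF dx(1)] dx(2) by auto
  have f: "opp_face (flip xs) v = obar S" "opp_face (flip xs) w = S'"
    using opp_face_reordering[OF r(1) dx(2)] r(2) xs obar_OC S by auto
  have fx: "flip xs \<in> orderings X d" "v \<in> set (flip xs)" "w \<in> set (flip xs)"
    using flip_in_orderings[OF xs(1)] xs(2,3) by auto
  have "nbr X d S' S"
    unfolding nbr_iff_opp_face using fx f not_sym[OF xs(4)] S by blast
  moreover have "nbr X d (obar S) (obar S')"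
    unfolding nbr_iff_opp_face using fx f xs(4) S obar_OC[OF S(1)] obar_OC[OF S(2)] by metis
  ultimately show ?thesis ..
qed

lemma nbr_obar:
  assumes "S \<in> OC"
  shows "N (obar S) = obar ` N S"
proof (intro subset_antisym subsetI)
  fix S'' assume "S'' \<in> N (obar S)"
  then have "nbr X d S (obar S'')" "S'' = obar (obar S'')"
    using nbr_sym[of "obar S" S''] obar_OC[OF assms] nbr_OC obar_OC by auto
  then show "S'' \<in> obar ` N S" by blast
next
  fix S'' assume "S'' \<in> obar ` N S"
  then obtain S1 where "nbr X d S S1" "S'' = obar S1" by blast
  then show "S'' \<in> N (obar S)" using nbr_sym by blast
qed

lemma inj_on_obar_nbr: "inj_on obar (N S)"
proof (rule inj_onI)
  fix a b assume "a \<in> N S" "b \<in> N S" "obar a = obar b"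
  then show "a = b" using nbr_OC obar_OC by (metis mem_Collect_eq)
qed

section \<open>Forms, the coboundary and Green's formula\<close>

text \<open>Forms are odd, so evaluating them at one orientation of each cell loses nothing;
  \<open>canon_ocell\<close> picks the orientation used in the definition of \<open>fnorm\<close>.\<close>

definition inner_form :: "('a list set \<Rightarrow> real) \<Rightarrow> ('a list set \<Rightarrow> real) \<Rightarrow> real" where
  "inner_form f g = (\<Sum>c\<in>C. f (canon_ocell c) * g (canon_ocell c) / real (deg X c))"

definition nbr_sum :: "('a list set \<Rightarrow> real) \<Rightarrow> 'a list set \<Rightarrow> real" where
  "nbr_sum f S = (\<Sum>S'\<in>N S. f S' / real (deg X (ocell S')))"

definition cob_energy :: "('a list set \<Rightarrow> real) \<Rightarrow> ('a list set \<Rightarrow> real) \<Rightarrow> real" where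
  "cob_energy f g = (\<Sum>t\<in>T. cobdry X d f (canon_ocell t) * cobdry X d g (canon_ocell t))"

lemma form_obar: "f \<in> forms X (d - 1) \<Longrightarrow> S \<in> OC \<Longrightarrow> f (obar S) = - f S"
  by (simp add: forms_def)

lemma form_outside: "f \<in> forms X (d - 1) \<Longrightarrow> S \<notin> OC \<Longrightarrow> f S = 0"
  by (simp add: forms_def)

lemma Aop_real:
  "Aop X d p (f :: 'a list set \<Rightarrow> real) S = (if S \<in> OC then p * f S + (1 - p) / real d * nbr_sum f S else 0)"
  unfolding Aop_def nbr_sum_def by simp

lemma Lup_nbr_sum: "Lup X d f S = (if S \<in> OC then f S - nbr_sum f S else 0)"
  unfolding Lup_def nbr_sum_def by simp

lemma canon_ocell_C: "c \<in> C \<Longrightarrow> canon_ocell c \<in> OC \<and> ocell (canon_ocell c) = c"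
  using canon_ocell_in_ocells[OF simplicial] by blast

lemma canon_C: "c \<in> C \<Longrightarrow> canon c \<in> orderings X (d - 1) \<and> set (canon c) = c"
  using canon_in_orderings[OF simplicial] by blast

lemma canon_T: "t \<in> T \<Longrightarrow> canon t \<in> orderings X d \<and> set (canon t) = t"
  using canon_in_orderings[OF simplicial] by blast

lemma form_mult_canon:
  fixes f g :: "'a list set \<Rightarrow> real"
  assumes "f \<in> forms X (d - 1)" "g \<in> forms X (d - 1)" "S \<in> OC"
  shows "f S * g S = f (canon_ocell (ocell S)) * g (canon_ocell (ocell S))"
proof -
  have c: "canon_ocell (ocell S) \<in> OC" using canon_ocell_C ocell_in_cells[OF assms(3)] by blast
  have "S = canon_ocell (ocell S) \<or> S = obar (canon_ocell (ocell S))"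
    using ocell_canon_cases[OF simplicial assms(3)] d_ge_2 by simp
  then show ?thesis using form_obar[OF assms(1) c] form_obar[OF assms(2) c] by auto
qed

lemma cobdry_oclass:
  fixes f :: "'a list set \<Rightarrow> real"
  assumes ys: "ys \<in> orderings X d" and f: "f \<in> forms X (d - 1)"
  shows "cobdry X d f (oclass ys) = (\<Sum>x\<in>set ys. f (opp_face ys x) / real (deg X (set ys - {x})))"
proof -
  let ?zs = "orep (oclass ys)"
  have zs: "?zs \<in> orderings X d" using orep_in_orderings[OF oclass_in_ocells[OF ys]] by blast
  have dz: "distinct ?zs" "length ?zs = d + 1" using zs by (auto simp: orderings_def)
  have dy: "distinct ys" "length ys \<ge> 3" using ys d_ge_2 by (auto simp: orderings_def)
  have r: "reordering ys ?zs" "even_reordering ys ?zs" using orep_oclass[OF dy(1)] by auto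
  have face_term: "(-1) ^ i * f (oclass (del i ?zs)) / real (deg X (set (del i ?zs)))
      = f (opp_face ?zs (?zs ! i)) / real (deg X (set ?zs - {?zs ! i}))" if i: "i < d + 1" for i
  proof -
    have "del i ?zs \<in> orderings X (d - 1)"
      using del_in_orderings[OF simplicial zs] i dz d_ge_2 by simp
    then have "oclass (del i ?zs) \<in> OC" by (rule oclass_in_ocells)
    then have "f (ind_face ?zs i) = (-1) ^ i * f (oclass (del i ?zs))"
      using form_obar[OF f] by (simp add: ind_face_def)
    then show ?thesis
      using ind_face_eq_opp_face[OF dz(1)] set_del[OF dz(1)] i dz(2) by simp
  qed
  have "cobdry X d f (oclass ys)
      = (\<Sum>i<d + 1. f (opp_face ?zs (?zs ! i)) / real (deg X (set ?zs - {?zs ! i})))"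
    using oclass_in_ocells[OF ys] face_term by (simp add: cobdry_def)
  also have "\<dots> = (\<Sum>x\<in>set ?zs. f (opp_face ?zs x) / real (deg X (set ?zs - {x})))"
    using sum.reindex_bij_betw[OF bij_betw_nth[OF dz(1) refl refl]] dz(2) lessThan_atLeast0 by simp
  also have "\<dots> = (\<Sum>x\<in>set ys. f (opp_face ys x) / real (deg X (set ys - {x})))"
    using opp_face_reordering[OF r(1) dy(2)] r by (auto simp: reordering_def intro!: sum.cong)
  finally show ?thesis .
qed

lemma cobdry_reordering:
  fixes f :: "'a list set \<Rightarrow> real"
  assumes ys: "ys \<in> orderings X d" and zs: "zs \<in> orderings X d" and s: "set ys = set zs"
    and f: "f \<in> forms X (d - 1)"
  shows "cobdry X d f (oclass zs) = (if even_reordering ys zs then 1 else -1) * cobdry X d f (oclass ys)"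
proof -
  have r: "reordering ys zs" using ys zs s by (simp add: reordering_def orderings_def)
  have l: "length ys \<ge> 3" using ys d_ge_2 by (simp add: orderings_def)
  have "f (opp_face zs x) = (if even_reordering ys zs then 1 else -1) * f (opp_face ys x)"
    if x: "x \<in> set ys" for x
    using opp_face_reordering[OF r l x] form_obar[OF f opp_face_in_OC[OF ys x]] by simp
  then show ?thesis
    unfolding cobdry_oclass[OF ys f] cobdry_oclass[OF zs f] s[symmetric]
    by (simp add: sum_distrib_left)
qed

lemma cobdry_Cons:
  fixes f :: "'a list set \<Rightarrow> real"
  assumes f: "f \<in> forms X (d - 1)" and s: "s \<in> orderings X (d - 1)" and v: "v \<in> link_vertices X (set s)"
  shows "cobdry X d f (oclass (v # s)) = f (oclass s) / real (deg X (set s))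
    - (\<Sum>x\<in>set s. f (obar (opp_face (v # s) x)) / real (deg X (ocell (obar (opp_face (v # s) x)))))"
proof -
  have ds: "distinct (v # s)" "length s \<ge> 2" using Cons_in_orderings[OF s v] d_ge_2 by (auto simp: orderings_def)
  have face: "f (opp_face (v # s) x) / real (deg X (insert v (set s) - {x}))
      = - (f (obar (opp_face (v # s) x)) / real (deg X (ocell (obar (opp_face (v # s) x)))))"
    if x: "x \<in> set s" for x
  proof -
    have "insert v (set s) - {x} = insert v (set s - {x})" using ds(1) x by auto
    then show ?thesis
      using form_obar[OF f ocell_nbr_face(1)[OF s v x]] ocell_nbr_face(3)[OF s v x] by simp
  qed
  have "cobdry X d f (oclass (v # s))
      = f (opp_face (v # s) v) / real (deg X (set s))
        + (\<Sum>x\<in>set s. f (opp_face (v # s) x) / real (deg X (insert v (set s) - {x})))"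
    using cobdry_oclass[OF Cons_in_orderings[OF s v] f] ds(1) by (simp add: sum.insert)
  then show ?thesis
    using face opp_face_Cons_hd[OF ds] by (simp add: sum_negf[symmetric])
qed

lemma sum_cobdry_link:
  fixes f :: "'a list set \<Rightarrow> real"
  assumes f: "f \<in> forms X (d - 1)" and c: "c \<in> C"
  shows "(\<Sum>v\<in>link_vertices X c. cobdry X d f (oclass (v # canon c))) = Lup X d f (canon_ocell c)"
proof -
  let ?s = "canon c"
  have s: "?s \<in> orderings X (d - 1)" "set ?s = c" using canon_C[OF c] by auto
  have "(\<Sum>v\<in>link_vertices X c. cobdry X d f (oclass (v # ?s)))
      = (\<Sum>v\<in>link_vertices X c. f (canon_ocell c) / real (deg X c))
        - (\<Sum>v\<in>link_vertices X (set ?s). \<Sum>x\<in>set ?s. f (obar (opp_face (v # ?s) x)) / real (deg X (ocell (obar (opp_face (v # ?s) x)))))"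
    using cobdry_Cons[OF f s(1)] s(2) by (simp add: sum_subtractf canon_ocell_def)
  also have "(\<Sum>v\<in>link_vertices X c. f (canon_ocell c) / real (deg X c)) = f (canon_ocell c)"
    using card_link_vertices[OF c] deg_pos[OF c] by simp
  also have "(\<Sum>v\<in>link_vertices X (set ?s). \<Sum>x\<in>set ?s. f (obar (opp_face (v # ?s) x)) / real (deg X (ocell (obar (opp_face (v # ?s) x)))))
      = nbr_sum f (canon_ocell c)"
    unfolding nbr_sum_def canon_ocell_def sum_nbr[OF s(1)] ..
  finally show ?thesis using canon_ocell_C[OF c] by (simp add: Lup_nbr_sum)
qed

lemma cobdry_canon_flag:
  fixes f g :: "'a list set \<Rightarrow> real"
  assumes f: "f \<in> forms X (d - 1)" and g: "g \<in> forms X (d - 1)"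
    and c: "c \<in> C" and v: "v \<in> link_vertices X c"
  shows "g (opp_face (canon (insert v c)) v) * cobdry X d f (canon_ocell (insert v c))
       = g (canon_ocell c) * cobdry X d f (oclass (v # canon c))"
proof -
  let ?s = "canon c" and ?t = "insert v c"
  have s: "?s \<in> orderings X (d - 1)" "set ?s = c" using canon_C[OF c] by auto
  have ys: "v # ?s \<in> orderings X d" using Cons_in_orderings s v by simp
  have "?t \<in> T"
    using ys s(2) distinct_card[of "v # ?s"] by (auto simp: orderings_def cells_def)
  then have yt: "canon ?t \<in> orderings X d" "set (canon ?t) = set (v # ?s)" using canon_T s by auto
  have r: "reordering (v # ?s) (canon ?t)" using ys yt by (simp add: reordering_def orderings_def)
  have l: "length (v # ?s) \<ge> 3" "length ?s \<ge> 2" using ys d_ge_2 by (auto simp: orderings_def)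
  have "g (opp_face (canon ?t) v) = (if even_reordering (v # ?s) (canon ?t) then 1 else -1) * g (oclass ?s)"
    using opp_face_reordering[OF r l(1)] opp_face_Cons_hd[of v ?s] ys l(2)
      form_obar[OF g oclass_in_ocells[OF s(1)]] by (simp add: orderings_def)
  moreover have "cobdry X d f (canon_ocell ?t)
      = (if even_reordering (v # ?s) (canon ?t) then 1 else -1) * cobdry X d f (oclass (v # ?s))"
    using cobdry_reordering[OF ys yt(1) yt(2)[symmetric] f] by (simp add: canon_ocell_def)
  ultimately show ?thesis by (simp add: canon_ocell_def)
qed

lemma cob_energy_eq_inner_Lup:
  fixes f g :: "'a list set \<Rightarrow> real"
  assumes f: "f \<in> forms X (d - 1)" and g: "g \<in> forms X (d - 1)"
  shows "cob_energy f g = inner_form (Lup X d f) g"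
proof -
  define H where "H t x = g (opp_face (canon t) x) * cobdry X d f (canon_ocell t) / real (deg X (t - {x}))" for t x
  have "cob_energy f g = (\<Sum>t\<in>T. \<Sum>x\<in>t. H t x)"
    unfolding cob_energy_def
  proof (rule sum.cong[OF refl])
    fix t assume t: "t \<in> T"
    show "cobdry X d f (canon_ocell t) * cobdry X d g (canon_ocell t) = (\<Sum>x\<in>t. H t x)"
      using cobdry_oclass[OF conjunct1[OF canon_T[OF t]] g] canon_T[OF t]
      by (simp add: H_def canon_ocell_def sum_distrib_left mult.commute)
  qed
  also have "\<dots> = (\<Sum>c\<in>C. \<Sum>v\<in>link_vertices X c. H (insert v c) v)"
    using sum_cells_Suc_flags[OF simplicial finite_X, where j = "d - 1" and h = H] d_ge_2 by simp
  also have "\<dots> = (\<Sum>c\<in>C. g (canon_ocell c) / real (deg X c)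
      * (\<Sum>v\<in>link_vertices X c. cobdry X d f (oclass (v # canon c))))"
  proof (rule sum.cong[OF refl])
    fix c assume c: "c \<in> C"
    have "H (insert v c) v = g (canon_ocell c) / real (deg X c) * cobdry X d f (oclass (v # canon c))"
      if v: "v \<in> link_vertices X c" for v
      using cobdry_canon_flag[OF f g c v] v by (simp add: H_def link_vertices_def)
    then show "(\<Sum>v\<in>link_vertices X c. H (insert v c) v) = g (canon_ocell c) / real (deg X c)
      * (\<Sum>v\<in>link_vertices X c. cobdry X d f (oclass (v # canon c)))"
      by (simp add: sum_distrib_left)
  qed
  also have "\<dots> = inner_form (Lup X d f) g"
    unfolding inner_form_def using sum_cobdry_link[OF f] by (intro sum.cong) auto
  finally show ?thesis .
qed

lemma forms_lin:
  fixes f g :: "'a list set \<Rightarrow> real"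
  shows "f \<in> forms X (d - 1) \<Longrightarrow> g \<in> forms X (d - 1) \<Longrightarrow> (\<lambda>S. a * f S + b * g S) \<in> forms X (d - 1)"
  by (simp add: forms_def)

lemma nbr_sum_lin: "nbr_sum (\<lambda>S. a * f S + b * g S) S = a * nbr_sum f S + b * nbr_sum g S"
  unfolding nbr_sum_def by (simp add: sum.distrib sum_distrib_left add_divide_distrib)

lemma Aop_lin:
  fixes f g :: "'a list set \<Rightarrow> real"
  shows "Aop X d p (\<lambda>S. a * f S + b * g S) = (\<lambda>S. a * Aop X d p f S + b * Aop X d p g S)"
  by (rule ext) (simp add: Aop_real nbr_sum_lin algebra_simps)

lemma inner_form_lin: "inner_form (\<lambda>S. a * f S + b * g S) h = a * inner_form f h + b * inner_form g h"
  unfolding inner_form_def by (simp add: sum.distrib sum_distrib_left algebra_simps add_divide_distrib)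

lemma inner_form_commute: "inner_form f g = inner_form g f"
  unfolding inner_form_def by (simp add: mult.commute)

lemma inner_form_nonneg: "inner_form f f \<ge> 0"
  unfolding inner_form_def by (intro sum_nonneg) auto

lemma inner_form_self_eq_0:
  fixes f :: "'a list set \<Rightarrow> real"
  assumes f: "f \<in> forms X (d - 1)" and z: "inner_form f f = 0"
  shows "f = (\<lambda>_. 0)"
proof
  fix S
  have "\<forall>c\<in>C. f (canon_ocell c) * f (canon_ocell c) / real (deg X c) = 0"
    using z sum_nonneg_eq_0_iff[OF finite_C, of "\<lambda>c. f (canon_ocell c) * f (canon_ocell c) / real (deg X c)"]
    unfolding inner_form_def by auto
  then have zero: "f (canon_ocell c) = 0" if c: "c \<in> C" for c
    using c deg_pos[OF c] by auto
  show "f S = 0"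
  proof (cases "S \<in> OC")
    case True
    then show ?thesis using form_mult_canon[OF f f True] zero[OF ocell_in_cells[OF True]] by simp
  qed (use form_outside[OF f] in simp)
qed

lemma inner_form_Cauchy_Schwarz: "(inner_form f g)\<^sup>2 \<le> inner_form f f * inner_form g g"
proof -
  define w where "w f c = f (canon_ocell c) / sqrt (deg X c)" for f :: "'a list set \<Rightarrow> real" and c
  have "f (canon_ocell c) * g (canon_ocell c) / real (deg X c) = w f c * w g c" for f g c
    unfolding w_def by (cases "deg X c = 0") (simp_all add: divide_simps)
  then have "inner_form f g = (\<Sum>c\<in>C. w f c * w g c)" for f g
    unfolding inner_form_def by simp
  moreover have "(\<Sum>c\<in>C. w f c * w g c)\<^sup>2 \<le> (\<Sum>c\<in>C. (w f c)\<^sup>2) * (\<Sum>c\<in>C. (w g c)\<^sup>2)"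
    by (rule Cauchy_Schwarz_ineq_sum)
  ultimately show ?thesis by (simp add: power2_eq_square)
qed

lemma sum_nbr_obar:
  assumes S: "S \<in> OC"
  shows "(\<Sum>S'\<in>N (obar S). \<phi> S' / real (deg X (ocell S')))
    = (\<Sum>S'\<in>N S. \<phi> (obar S') / real (deg X (ocell S')))"
  unfolding nbr_obar[OF S] sum.reindex[OF inj_on_obar_nbr] using obar_OC nbr_OC
  by (intro sum.cong) auto

lemma nbr_sum_obar:
  fixes f :: "'a list set \<Rightarrow> real"
  assumes f: "f \<in> forms X (d - 1)" and S: "S \<in> OC"
  shows "nbr_sum f (obar S) = - nbr_sum f S"
  unfolding nbr_sum_def sum_nbr_obar[OF S] sum_negf[symmetric] using form_obar[OF f] nbr_OC
  by (intro sum.cong) auto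

lemma Aop_in_forms:
  fixes f :: "'a list set \<Rightarrow> real"
  shows "f \<in> forms X (d - 1) \<Longrightarrow> Aop X d p f \<in> forms X (d - 1)"
  unfolding forms_def using form_obar nbr_sum_obar obar_OC by (auto simp: Aop_real forms_def)

lemma Lup_in_forms:
  fixes f :: "'a list set \<Rightarrow> real"
  shows "f \<in> forms X (d - 1) \<Longrightarrow> Lup X d f \<in> forms X (d - 1)"
  unfolding forms_def using form_obar nbr_sum_obar obar_OC by (auto simp: Lup_nbr_sum forms_def)

lemma funpow_Aop_in_forms:
  fixes f :: "'a list set \<Rightarrow> real"
  shows "f \<in> forms X (d - 1) \<Longrightarrow> (Aop X d p ^^ n) f \<in> forms X (d - 1)"
proof (induction n)
  case (Suc n)
  then show ?case using Aop_in_forms[of "(Aop X d p ^^ n) f" p] by simp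
qed simp

lemma Aop_eq_Lup:
  fixes f :: "'a list set \<Rightarrow> real"
  assumes f: "f \<in> forms X (d - 1)"
  shows "Aop X d p f = (\<lambda>S. top_eigenvalue d p * f S - ((1 - p) / real d) * Lup X d f S)"
proof
  fix S
  define k where "k = (1 - p) / real d"
  have c: "top_eigenvalue d p = p + k" using d_ge_2 unfolding k_def by (simp add: field_simps)
  have "p * f S + k * nbr_sum f S = (p + k) * f S - k * (f S - nbr_sum f S)"
    by (simp add: algebra_simps)
  then show "Aop X d p f S = top_eigenvalue d p * f S - ((1 - p) / real d) * Lup X d f S"
    unfolding c using form_outside[OF f, of S] by (simp add: Aop_real Lup_nbr_sum k_def)
qed

lemma inner_Aop:
  fixes f :: "'a list set \<Rightarrow> real"
  assumes f: "f \<in> forms X (d - 1)"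
  shows "inner_form (Aop X d p f) g = top_eigenvalue d p * inner_form f g - ((1 - p) / real d) * inner_form (Lup X d f) g"
  unfolding Aop_eq_Lup[OF f] using inner_form_lin[of "top_eigenvalue d p" f "- ((1 - p) / real d)" "Lup X d f" g]
  by simp

lemma Aop_self_adjoint:
  fixes f g :: "'a list set \<Rightarrow> real"
  assumes "f \<in> forms X (d - 1)" "g \<in> forms X (d - 1)"
  shows "inner_form (Aop X d p f) g = inner_form f (Aop X d p g)"
proof -
  have "inner_form (Lup X d f) g = inner_form (Lup X d g) f"
    using cob_energy_eq_inner_Lup[OF assms] cob_energy_eq_inner_Lup[OF assms(2,1)]
    by (simp add: cob_energy_def mult.commute)
  then show ?thesis using inner_Aop[OF assms(1)] inner_Aop[OF assms(2)] inner_form_commute by metis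
qed

lemma cob_energy_le:
  fixes f :: "'a list set \<Rightarrow> real"
  assumes f: "f \<in> forms X (d - 1)"
  shows "cob_energy f f \<le> real (d + 1) * inner_form f f"
proof -
  define a where "a t x = f (opp_face (canon t) x) / real (deg X (t - {x}))" for t x
  have "cob_energy f f = (\<Sum>t\<in>T. (\<Sum>x\<in>t. a t x)\<^sup>2)"
    unfolding cob_energy_def a_def power2_eq_square
    using cobdry_oclass[OF conjunct1[OF canon_T] f] canon_T by (simp add: canon_ocell_def)
  also have "\<dots> \<le> (\<Sum>t\<in>T. real (d + 1) * (\<Sum>x\<in>t. (a t x)\<^sup>2))"
  proof (rule sum_mono)
    fix t assume "t \<in> T"
    then show "(\<Sum>x\<in>t. a t x)\<^sup>2 \<le> real (d + 1) * (\<Sum>x\<in>t. (a t x)\<^sup>2)"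
      using sum_squared_le_sum_of_squares[of "a t" t] by (simp add: cells_def mult.commute)
  qed
  also have "\<dots> = real (d + 1) * (\<Sum>c\<in>C. \<Sum>v\<in>link_vertices X c. (a (insert v c) v)\<^sup>2)"
    using sum_cells_Suc_flags[OF simplicial finite_X, where j = "d - 1"] d_ge_2
    by (simp add: sum_distrib_left)
  also have "(\<Sum>c\<in>C. \<Sum>v\<in>link_vertices X c. (a (insert v c) v)\<^sup>2) = inner_form f f"
    unfolding inner_form_def
  proof (rule sum.cong[OF refl])
    fix c assume c: "c \<in> C"
    have "(a (insert v c) v)\<^sup>2 = f (canon_ocell c) * f (canon_ocell c) / (real (deg X c))\<^sup>2"
      if v: "v \<in> link_vertices X c" for v
    proof -
      have t: "insert v c \<in> T" "insert v c - {v} = c"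
        using v c finite_cell[OF simplicial] d_ge_2 by (auto simp: cells_def link_vertices_def)
      note yt = canon_T[OF t(1)]
      have vin: "v \<in> set (canon (insert v c))" using yt by simp
      have "f (opp_face (canon (insert v c)) v) * f (opp_face (canon (insert v c)) v) = f (canon_ocell c) * f (canon_ocell c)"
        using form_mult_canon[OF f f opp_face_in_OC[OF conjunct1[OF yt] vin]]
          ocell_opp_face_top[OF conjunct1[OF yt] vin] yt t(2) by simp
      then show ?thesis unfolding a_def using t(2) by (simp add: power2_eq_square)
    qed
    then show "(\<Sum>v\<in>link_vertices X c. (a (insert v c) v)\<^sup>2) = f (canon_ocell c) * f (canon_ocell c) / real (deg X c)"
      using card_link_vertices[OF c] deg_pos[OF c] by (simp add: power2_eq_square)
  qed
  finally show ?thesis .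
qed

lemma Aop_quadratic_bounds:
  fixes f :: "'a list set \<Rightarrow> real"
  assumes f: "f \<in> forms X (d - 1)" and p: "0 \<le> p" "p < 1"
  shows "(2 * p - 1) * inner_form f f \<le> inner_form (Aop X d p f) f"
    and "inner_form (Aop X d p f) f \<le> top_eigenvalue d p * inner_form f f"
proof -
  define k where "k = (1 - p) / real d"
  have e: "inner_form (Aop X d p f) f = top_eigenvalue d p * inner_form f f - k * cob_energy f f"
    using inner_Aop[OF f] cob_energy_eq_inner_Lup[OF f f] unfolding k_def by simp
  have k: "k \<ge> 0" using p d_ge_2 unfolding k_def by simp
  have "cob_energy f f \<ge> 0" unfolding cob_energy_def by (intro sum_nonneg) auto
  then show "inner_form (Aop X d p f) f \<le> top_eigenvalue d p * inner_form f f"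
    using e k by simp
  have "top_eigenvalue d p - k * real (d + 1) = 2 * p - 1"
    using d_ge_2 unfolding k_def by (simp add: field_simps)
  then have "(2 * p - 1) * inner_form f f = top_eigenvalue d p * inner_form f f - k * (real (d + 1) * inner_form f f)"
    by (metis left_diff_distrib mult.assoc)
  then show "(2 * p - 1) * inner_form f f \<le> inner_form (Aop X d p f) f"
    using e mult_left_mono[OF cob_energy_le[OF f] k] by linarith
qed

lemma inner_form_scale_right: "inner_form f (\<lambda>S. c * g S) = c * inner_form f g"
  using inner_form_lin[of c g 0 g f] inner_form_commute by simp

lemma inner_form_polarization:
  "inner_form (\<lambda>S. u S + v S) (\<lambda>S. f S + g S) - inner_form (\<lambda>S. u S - v S) (\<lambda>S. f S - g S)
    = 2 * inner_form u g + 2 * inner_form v f"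
  unfolding inner_form_def sum_subtractf[symmetric] sum_distrib_left sum.distrib[symmetric]
  by (intro sum.cong) (simp_all add: algebra_simps add_divide_distrib diff_divide_distrib)

lemma inner_form_parallelogram:
  "inner_form (\<lambda>S. f S + g S) (\<lambda>S. f S + g S) + inner_form (\<lambda>S. f S - g S) (\<lambda>S. f S - g S)
    = 2 * inner_form f f + 2 * inner_form g g"
  unfolding inner_form_def sum_distrib_left sum.distrib[symmetric]
  by (intro sum.cong) (simp_all add: algebra_simps add_divide_distrib diff_divide_distrib)

lemma abs_inner_Aop_le:
  fixes h :: "'a list set \<Rightarrow> real"
  assumes h: "h \<in> forms X (d - 1)" and p: "0 \<le> p" "p < 1"
  shows "\<bar>inner_form (Aop X d p h) h\<bar> \<le> max \<bar>2 * p - 1\<bar> (top_eigenvalue d p) * inner_form h h"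
proof -
  have "- max \<bar>2 * p - 1\<bar> (top_eigenvalue d p) * inner_form h h \<le> (2 * p - 1) * inner_form h h"
    using inner_form_nonneg[of h] by (intro mult_right_mono) auto
  moreover have "top_eigenvalue d p * inner_form h h \<le> max \<bar>2 * p - 1\<bar> (top_eigenvalue d p) * inner_form h h"
    using inner_form_nonneg[of h] by (intro mult_right_mono) auto
  ultimately show ?thesis using Aop_quadratic_bounds[OF h p] by linarith
qed

text \<open>A self-adjoint operator whose quadratic form is bounded by \<open>r\<close> has norm at most \<open>r\<close>;
  polarize at \<open>f\<close> and \<open>A f / r\<close>.\<close>

lemma Aop_norm_bound:
  fixes f :: "'a list set \<Rightarrow> real"
  assumes f: "f \<in> forms X (d - 1)" and p: "0 \<le> p" "p < 1"
  shows "inner_form (Aop X d p f) (Aop X d p f) \<le> (max \<bar>2 * p - 1\<bar> (top_eigenvalue d p))\<^sup>2 * inner_form f f"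
proof -
  define r where "r = max \<bar>2 * p - 1\<bar> (top_eigenvalue d p)"
  have "p * (real d - 1) \<ge> 0" using p d_ge_2 by simp
  then have "top_eigenvalue d p > 0" using d_ge_2 by simp
  then have r: "r > 0" unfolding r_def by linarith
  define A where "A = (Aop X d p :: ('a list set \<Rightarrow> real) \<Rightarrow> _)"
  define g where "g = (\<lambda>S. (1 / r) * A f S)"
  define a where "a = inner_form f f"
  define b where "b = inner_form (A f) (A f)"
  have Af: "A f \<in> forms X (d - 1)" using Aop_in_forms[OF f] unfolding A_def .
  have g: "g \<in> forms X (d - 1)" using forms_lin[OF Af Af, of "1 / r" 0] unfolding g_def by simp
  have Afg: "inner_form (A f) g = b / r" unfolding g_def b_def inner_form_scale_right by simp
  have Agf: "inner_form (A g) f = b / r"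
    using Aop_self_adjoint[OF g f] Afg inner_form_commute unfolding A_def by metis
  have gg: "inner_form g g = b / r\<^sup>2"
    unfolding g_def b_def inner_form_scale_right inner_form_commute[of "\<lambda>S. (1 / r) * A f S"]
    by (simp add: power2_eq_square)
  have plus: "(\<lambda>S. f S + g S) \<in> forms X (d - 1)" and minus: "(\<lambda>S. f S - g S) \<in> forms X (d - 1)"
    using forms_lin[OF f g, of 1 1] forms_lin[OF f g, of 1 "-1"] by simp_all
  have "A (\<lambda>S. f S + g S) = (\<lambda>S. A f S + A g S)" "A (\<lambda>S. f S - g S) = (\<lambda>S. A f S - A g S)"
    using Aop_lin[of p 1 f 1 g] Aop_lin[of p 1 f "-1" g] unfolding A_def by simp_all
  then have "4 * (b / r) = inner_form (A (\<lambda>S. f S + g S)) (\<lambda>S. f S + g S)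
      - inner_form (A (\<lambda>S. f S - g S)) (\<lambda>S. f S - g S)"
    using inner_form_polarization[of "A f" "A g" f g] Afg Agf by simp
  also have "\<dots> \<le> r * inner_form (\<lambda>S. f S + g S) (\<lambda>S. f S + g S) + r * inner_form (\<lambda>S. f S - g S) (\<lambda>S. f S - g S)"
    using abs_inner_Aop_le[OF plus p] abs_inner_Aop_le[OF minus p] unfolding A_def r_def by linarith
  also have "\<dots> = r * (inner_form (\<lambda>S. f S + g S) (\<lambda>S. f S + g S) + inner_form (\<lambda>S. f S - g S) (\<lambda>S. f S - g S))"
    by (simp add: distrib_left)
  also have "\<dots> = r * (2 * a + 2 * (b / r\<^sup>2))"
    unfolding inner_form_parallelogram gg a_def ..
  finally have "4 * b \<le> 2 * r\<^sup>2 * a + 2 * b" using r by (simp add: field_simps power2_eq_square)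
  then show ?thesis unfolding a_def b_def A_def r_def by simp
qed

lemma funpow_Aop_norm_bound:
  fixes f :: "'a list set \<Rightarrow> real"
  assumes f: "f \<in> forms X (d - 1)" and p: "0 \<le> p" "p < 1"
  shows "inner_form ((Aop X d p ^^ n) f) ((Aop X d p ^^ n) f)
    \<le> ((max \<bar>2 * p - 1\<bar> (top_eigenvalue d p))\<^sup>2) ^ n * inner_form f f"
proof (induction n)
  case (Suc n)
  have "inner_form ((Aop X d p ^^ Suc n) f) ((Aop X d p ^^ Suc n) f)
      \<le> (max \<bar>2 * p - 1\<bar> (top_eigenvalue d p))\<^sup>2 * inner_form ((Aop X d p ^^ n) f) ((Aop X d p ^^ n) f)"
    using Aop_norm_bound[OF funpow_Aop_in_forms[OF f] p] by simp
  also have "\<dots> \<le> (max \<bar>2 * p - 1\<bar> (top_eigenvalue d p))\<^sup>2 * (((max \<bar>2 * p - 1\<bar> (top_eigenvalue d p))\<^sup>2) ^ n * inner_form f f)"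
    using Suc by (intro mult_left_mono) auto
  finally show ?case by (simp add: mult.assoc)
qed simp

lemma fnorm_eq_sqrt_inner_form: "fnorm X d f = sqrt (inner_form f f)"
  unfolding fnorm_def inner_form_def canon_ocell_def canon_def by (simp add: power2_eq_square)

lemma walk_prob_Suc:
  assumes S': "S' \<in> OC"
  shows "walk_prob X d p S0 (Suc n) S' = p * walk_prob X d p S0 n S'
     + (1 - p) / real d * (\<Sum>S\<in>N S'. walk_prob X d p S0 n S / real (deg X (ocell S)))"
proof -
  define w where "w = walk_prob X d p S0 n"
  have "w S * trans_prob X d p S S' = (if S = S' then p * w S else 0)
      + (if nbr X d S S' then (1 - p) / real d * (w S / real (deg X (ocell S))) else 0)" for S
    using nbr_irrefl[of S] by (auto simp: trans_prob_def)
  then have "walk_prob X d p S0 (Suc n) S' = (\<Sum>S\<in>OC. if S = S' then p * w S else 0)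
      + (\<Sum>S\<in>OC. if nbr X d S S' then (1 - p) / real d * (w S / real (deg X (ocell S))) else 0)"
    by (simp add: w_def sum.distrib)
  also have "(\<Sum>S\<in>OC. if nbr X d S S' then (1 - p) / real d * (w S / real (deg X (ocell S))) else 0)
      = (\<Sum>S\<in>{S \<in> OC. nbr X d S S'}. (1 - p) / real d * (w S / real (deg X (ocell S))))"
    by (rule sum.inter_filter[OF finite_OC, symmetric])
  also have "{S \<in> OC. nbr X d S S'} = N S'" using nbr_sym nbr_OC by blast
  finally show ?thesis using S' finite_OC unfolding w_def by (simp add: sum_distrib_left)
qed

lemma Eproc_Suc:
  assumes S0: "S0 \<in> OC"
  shows "Eproc X d p S0 (Suc n) = Aop X d p (Eproc X d p S0 n)"
proof
  fix S
  define w where "w = walk_prob X d p S0 n"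
  show "Eproc X d p S0 (Suc n) S = Aop X d p (Eproc X d p S0 n) S"
  proof (cases "S \<in> OC")
    case True
    define k where "k = (1 - p) / real d"
    define a where "a = (\<Sum>S'\<in>N S. w S' / real (deg X (ocell S')))"
    define b where "b = (\<Sum>S'\<in>N S. w (obar S') / real (deg X (ocell S')))"
    have M: "nbr_sum (Eproc X d p S0 n) S = a - b"
      unfolding nbr_sum_def a_def b_def w_def sum_subtractf[symmetric] diff_divide_distrib[symmetric]
      using nbr_OC by (intro sum.cong) (auto simp: Eproc_def)
    have w1: "walk_prob X d p S0 (Suc n) S = p * w S + k * a"
      using walk_prob_Suc[OF True] unfolding w_def a_def k_def by simp
    have w2: "walk_prob X d p S0 (Suc n) (obar S) = p * w (obar S) + k * b"
      using walk_prob_Suc[OF conjunct1[OF obar_OC[OF True]]] sum_nbr_obar[OF True, of w]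
      unfolding w_def b_def k_def by simp
    have "Eproc X d p S0 (Suc n) S = p * (w S - w (obar S)) + k * (a - b)"
      using True w1 w2 by (simp add: Eproc_def algebra_simps)
    also have "\<dots> = Aop X d p (Eproc X d p S0 n) S"
      using True M unfolding k_def w_def by (simp add: Aop_real Eproc_def)
    finally show ?thesis .
  qed (simp add: Eproc_def Aop_real)
qed

lemma Eproc_0:
  assumes S0: "S0 \<in> OC"
  shows "Eproc X d p S0 0 = ind1 S0"
proof
  fix S
  show "Eproc X d p S0 0 S = ind1 S0 S"
  proof (cases "S \<in> OC")
    case True
    then show ?thesis using obar_eq_iff[OF True S0] obar_OC[OF S0] by (auto simp: Eproc_def ind1_def)
  next
    case False
    then have "S \<noteq> S0" "S \<noteq> obar S0" using S0 obar_OC[OF S0] by auto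
    then show ?thesis using False by (simp add: Eproc_def ind1_def)
  qed
qed

lemma Eproc_eq_funpow_Aop:
  assumes S0: "S0 \<in> OC"
  shows "Eproc X d p S0 n = (Aop X d p ^^ n) (ind1 S0)"
  by (induction n) (simp_all add: Eproc_0[OF S0] Eproc_Suc[OF S0])

lemma ind1_in_forms:
  assumes S0: "S0 \<in> OC"
  shows "ind1 S0 \<in> forms X (d - 1)"
proof -
  have "ind1 S0 (obar S) = - ind1 S0 S" if S: "S \<in> OC" for S
    using obar_eq_iff[OF S S0] obar_eq_iff[OF S conjunct1[OF obar_OC[OF S0]]] obar_OC[OF S0]
    by (auto simp: ind1_def)
  moreover have "ind1 S0 S = 0" if "S \<notin> OC" for S
    using that S0 obar_OC[OF S0] by (auto simp: ind1_def)
  ultimately show ?thesis by (simp add: forms_def)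
qed

lemma inner_ind1_ind1:
  assumes S0: "S0 \<in> OC"
  shows "inner_form (ind1 S0) (ind1 S0) \<le> 1"
proof -
  have "ind1 S0 (canon_ocell c) * ind1 S0 (canon_ocell c) / real (deg X c)
      = (if c = ocell S0 then 1 / real (deg X c) else 0)" if c: "c \<in> C" for c
  proof -
    have "canon_ocell c = S0 \<or> canon_ocell c = obar S0" if "c = ocell S0"
      using ocells_same_ocell[OF S0 conjunct1[OF canon_ocell_C[OF c]]] canon_ocell_C[OF c] that d_ge_2 by simp
    moreover have "canon_ocell c \<noteq> S0 \<and> canon_ocell c \<noteq> obar S0" if "c \<noteq> ocell S0"
      using canon_ocell_C[OF c] obar_OC[OF S0] that by auto
    ultimately show ?thesis using obar_OC[OF S0] by (auto simp: ind1_def)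
  qed
  then have "inner_form (ind1 S0) (ind1 S0) = (\<Sum>c\<in>C. if c = ocell S0 then 1 / real (deg X c) else 0)"
    unfolding inner_form_def by (intro sum.cong) auto
  also have "\<dots> \<le> 1" using ocell_in_cells[OF S0] finite_C deg_pos[OF ocell_in_cells[OF S0]] by simp
  finally show ?thesis .
qed

section \<open>Eigenvalues and closed forms\<close>

lemma Aop_Re_Im:
  fixes f :: "'a list set \<Rightarrow> complex"
  shows "Aop X d p (\<lambda>S. Re (f S)) = (\<lambda>S. Re (Aop X d p f S))"
    and "Aop X d p (\<lambda>S. Im (f S)) = (\<lambda>S. Im (Aop X d p f S))"
  by (rule ext, simp add: Aop_def)+

lemma Aop_eigenvalue_bounds:
  fixes f :: "'a list set \<Rightarrow> complex" and \<mu> :: complex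
  assumes f: "f \<in> forms X (d - 1)" and nz: "f \<noteq> (\<lambda>_. 0)" and eig: "Aop X d p f = (\<lambda>S. \<mu> * f S)"
    and p: "0 \<le> p" "p < 1"
  shows "Im \<mu> = 0 \<and> 2 * p - 1 \<le> Re \<mu> \<and> Re \<mu> \<le> top_eigenvalue d p"
proof -
  define u where "u = (\<lambda>S. Re (f S))"
  define v where "v = (\<lambda>S. Im (f S))"
  have u: "u \<in> forms X (d - 1)" and v: "v \<in> forms X (d - 1)"
    using f unfolding u_def v_def forms_def by auto
  have Au: "Aop X d p u = (\<lambda>S. Re \<mu> * u S + (- Im \<mu>) * v S)"
    and Av: "Aop X d p v = (\<lambda>S. Im \<mu> * u S + Re \<mu> * v S)"
    unfolding u_def v_def Aop_Re_Im eig by (simp_all add: fun_eq_iff algebra_simps)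
  have Q: "inner_form u u + inner_form v v > 0"
  proof (rule ccontr)
    assume "\<not> ?thesis"
    then have "u = (\<lambda>_. 0)" "v = (\<lambda>_. 0)"
      using inner_form_self_eq_0[OF u] inner_form_self_eq_0[OF v] inner_form_nonneg[of u]
        inner_form_nonneg[of v] by linarith+
    then have "f = (\<lambda>_. 0)" unfolding u_def v_def by (metis complex_eqI zero_complex.sel)
    then show False using nz by simp
  qed
  have "inner_form (Aop X d p u) v = inner_form u (Aop X d p v)" using Aop_self_adjoint[OF u v] .
  then have "Im \<mu> * (inner_form u u + inner_form v v) = 0"
    unfolding Au Av inner_form_lin
    using inner_form_commute[of u v] inner_form_commute[of u "\<lambda>S. Im \<mu> * u S + Re \<mu> * v S"]
      inner_form_lin[of "Im \<mu>" u "Re \<mu>" v u] by (simp add: algebra_simps)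
  then have im: "Im \<mu> = 0" using Q by simp
  have "inner_form (Aop X d p u) u = Re \<mu> * inner_form u u" "inner_form (Aop X d p v) v = Re \<mu> * inner_form v v"
    unfolding Au Av inner_form_lin using im by simp_all
  then have "(2 * p - 1) * (inner_form u u + inner_form v v) \<le> Re \<mu> * (inner_form u u + inner_form v v)"
    "Re \<mu> * (inner_form u u + inner_form v v) \<le> top_eigenvalue d p * (inner_form u u + inner_form v v)"
    using Aop_quadratic_bounds[OF u p] Aop_quadratic_bounds[OF v p] by (simp_all add: ring_distribs)
  then show ?thesis using im mult_le_cancel_right_pos[OF Q] by blast
qed

lemma Lup_zero_iff_closed:
  fixes f :: "'a list set \<Rightarrow> real"
  assumes f: "f \<in> forms X (d - 1)"
  shows "Lup X d f = (\<lambda>_. 0) \<longleftrightarrow> f \<in> closed_forms X d"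
proof
  assume "Lup X d f = (\<lambda>_. 0)"
  then have "cob_energy f f = 0" using cob_energy_eq_inner_Lup[OF f f] by (simp add: inner_form_def)
  then have canon0: "cobdry X d f (canon_ocell t) = 0" if "t \<in> T" for t
    using sum_nonneg_eq_0_iff[OF finite_T, of "\<lambda>t. cobdry X d f (canon_ocell t) * cobdry X d f (canon_ocell t)"]
      that unfolding cob_energy_def by auto
  have "cobdry X d f T0 = 0" for T0
  proof (cases "T0 \<in> ocells X d")
    case True
    then obtain ys where ys: "ys \<in> orderings X d" "T0 = oclass ys" by (rule ocellsE)
    then have "set ys \<in> T" by (auto simp: orderings_def cells_def distinct_card)
    then show ?thesis
      using cobdry_reordering[OF conjunct1[OF canon_T] ys(1) _ f] canon_T canon0 ys(2)
      by (simp add: canon_ocell_def)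
  qed (simp add: cobdry_def)
  then show "f \<in> closed_forms X d" using f by (simp add: closed_forms_def)
next
  assume "f \<in> closed_forms X d"
  then have "cob_energy f (Lup X d f) = 0" by (simp add: closed_forms_def cob_energy_def)
  then have "inner_form (Lup X d f) (Lup X d f) = 0"
    using cob_energy_eq_inner_Lup[OF f Lup_in_forms[OF f]] inner_form_commute by simp
  then show "Lup X d f = (\<lambda>_. 0)" using inner_form_self_eq_0[OF Lup_in_forms[OF f]] by simp
qed

lemma top_eigenspace_eq_closed_forms:
  fixes f :: "'a list set \<Rightarrow> real"
  assumes f: "f \<in> forms X (d - 1)" and p: "p < 1"
  shows "Aop X d p f = (\<lambda>S. top_eigenvalue d p * f S) \<longleftrightarrow> f \<in> closed_forms X d"
proof -
  have "(1 - p) / real d \<noteq> 0" using p d_ge_2 by simp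
  then have "Aop X d p f = (\<lambda>S. top_eigenvalue d p * f S) \<longleftrightarrow> Lup X d f = (\<lambda>_. 0)"
    unfolding Aop_eq_Lup[OF f] by (simp add: fun_eq_iff)
  then show ?thesis using Lup_zero_iff_closed[OF f] by simp
qed

section \<open>A closed form supported on the star of a face\<close>

definition star_form :: "'a list \<Rightarrow> 'a list set \<Rightarrow> real" where
  "star_form r S = (if S \<in> OC \<and> set r \<subseteq> ocell S then
     (if S = oclass (the_elem (ocell S - set r) # r) then 1 else -1) * real (deg X (ocell S)) else 0)"

lemma star_form_oclass_Cons:
  assumes wr: "w # r \<in> orderings X (d - 1)"
  shows "star_form r (oclass (w # r)) = real (deg X (set (w # r)))"
    and "star_form r (obar (oclass (w # r))) = - real (deg X (set (w # r)))"
proof -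
  have o: "oclass (w # r) \<in> OC" using oclass_in_ocells[OF wr] .
  have dw: "distinct (w # r)" using wr by (simp add: orderings_def)
  have oc: "ocell (oclass (w # r)) = set (w # r)" "ocell (obar (oclass (w # r))) = set (w # r)"
    using ocell_oclass[OF dw] obar_OC[OF o] by auto
  have "set (w # r) - set r = {w}" using dw by auto
  then show "star_form r (oclass (w # r)) = real (deg X (set (w # r)))"
    "star_form r (obar (oclass (w # r))) = - real (deg X (set (w # r)))"
    using o oc obar_OC[OF o] unfolding star_form_def by auto
qed

lemma star_form_cases:
  assumes r: "r \<in> orderings X (d - 2)" and S: "S \<in> OC" and sub: "set r \<subseteq> ocell S"
  obtains w where "w # r \<in> orderings X (d - 1)" "S = oclass (w # r) \<or> S = obar (oclass (w # r))"
proof -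
  have c: "ocell S \<in> C" using ocell_in_cells[OF S] .
  have "card (ocell S - set r) = 1"
    using c sub r d_ge_2 finite_cell[OF simplicial]
    by (simp add: card_Diff_subset cells_def orderings_def distinct_card finite_subset)
  then obtain w where w: "ocell S - set r = {w}" by (rule card_1_singletonE)
  then have "set (w # r) = ocell S" "w \<notin> set r" using sub by auto
  then have o: "w # r \<in> orderings X (d - 1)"
    using r c d_ge_2 by (auto simp: orderings_def cells_def)
  have "ocell (oclass (w # r)) = ocell S"
    using ocell_oclass[of "w # r"] o \<open>set (w # r) = ocell S\<close> by (simp add: orderings_def)
  then have "S = oclass (w # r) \<or> S = obar (oclass (w # r))"
    using ocells_same_ocell[OF oclass_in_ocells[OF o] S] d_ge_2 by simp
  then show ?thesis using that o by blast
qed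

lemma star_form_in_forms:
  assumes r: "r \<in> orderings X (d - 2)"
  shows "star_form r \<in> forms X (d - 1)"
proof -
  have "star_form r (obar S) = - star_form r S" if S: "S \<in> OC" for S
  proof (cases "set r \<subseteq> ocell S")
    case True
    then obtain w where w: "w # r \<in> orderings X (d - 1)" "S = oclass (w # r) \<or> S = obar (oclass (w # r))"
      using star_form_cases[OF r S] by blast
    then show ?thesis
      using star_form_oclass_Cons[OF w(1)] obar_OC[OF oclass_in_ocells[OF w(1)]] by auto
  qed (use obar_OC[OF S] in \<open>simp add: star_form_def\<close>)
  then show ?thesis by (simp add: forms_def star_form_def)
qed

lemma star_form_opp_face_eq_0:
  assumes "xs \<in> orderings X d" "x \<in> set xs" "\<not> set r \<subseteq> set xs - {x}"
  shows "star_form r (opp_face xs x) = 0"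
  using ocell_opp_face_top[OF assms(1,2)] assms(3) by (simp add: star_form_def)

lemma cobdry_star_form_Cons2:
  assumes r: "r \<in> orderings X (d - 2)" and ys: "a # b # r \<in> orderings X d"
  shows "cobdry X d (star_form r) (oclass (a # b # r)) = 0"
proof -
  have dy: "distinct (a # b # r)" "length r = d - 1" using ys by (auto simp: orderings_def)
  have br: "b # r \<in> orderings X (d - 1)" and ar: "a # r \<in> orderings X (d - 1)"
    using del_in_orderings[OF simplicial ys, of 0] del_in_orderings[OF simplicial ys, of 1] d_ge_2
    by (simp_all add: del_def)
  have deg_pos': "deg X (set (b # r)) > 0" "deg X (set (a # r)) > 0"
    using deg_pos br ar by (auto simp: orderings_def cells_def distinct_card)
  have "opp_face (a # b # r) a = oclass (b # r)"
    using opp_face_Cons_hd[of a "b # r"] dy d_ge_2 by simp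
  moreover have "set (a # b # r) - {a} = set (b # r)" using dy(1) by auto
  ultimately have ta: "star_form r (opp_face (a # b # r) a) / real (deg X (set (a # b # r) - {a})) = 1"
    using star_form_oclass_Cons(1)[OF br] deg_pos' by simp
  have "opp_face (a # b # r) b = obar (oclass (a # r))"
    using opp_face_Cons_second[of a b r] dy d_ge_2 by simp
  moreover have "set (a # b # r) - {b} = set (a # r)" using dy(1) by auto
  ultimately have tb: "star_form r (opp_face (a # b # r) b) / real (deg X (set (a # b # r) - {b})) = -1"
    using star_form_oclass_Cons(2)[OF ar] deg_pos' by simp
  have "(\<Sum>x\<in>set r. star_form r (opp_face (a # b # r) x) / real (deg X (set (a # b # r) - {x}))) = 0"
    using star_form_opp_face_eq_0[OF ys] dy(1) by (intro sum.neutral) auto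
  then show ?thesis
    using cobdry_oclass[OF ys star_form_in_forms[OF r]] ta tb dy(1) by (simp add: sum.insert)
qed

lemma star_form_closed:
  assumes r: "r \<in> orderings X (d - 2)"
  shows "star_form r \<in> closed_forms X d"
proof -
  have zero: "cobdry X d (star_form r) (oclass ys) = 0" if ys: "ys \<in> orderings X d" for ys
  proof (cases "set r \<subseteq> set ys")
    case False
    then have "star_form r (opp_face ys x) = 0" if "x \<in> set ys" for x
      using star_form_opp_face_eq_0[OF ys that] by blast
    then show ?thesis using cobdry_oclass[OF ys star_form_in_forms[OF r]] by simp
  next
    case True
    have "card (set ys - set r) = 2"
      using True ys r d_ge_2 by (simp add: card_Diff_subset orderings_def distinct_card)
    then obtain a b where ab: "set ys - set r = {a, b}" "a \<noteq> b" by (metis card_2_iff)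
    have s: "set (a # b # r) = set ys" using ab True by auto
    have ys': "a # b # r \<in> orderings X d"
      using ab s r ys d_ge_2 by (auto simp: orderings_def card_distinct distinct_card)
    show ?thesis
      using cobdry_reordering[OF ys' ys s star_form_in_forms[OF r]] cobdry_star_form_Cons2[OF r ys'] by simp
  qed
  have "cobdry X d (star_form r) T0 = 0" for T0
  proof (cases "T0 \<in> ocells X d")
    case True
    then obtain ys where "ys \<in> orderings X d" "T0 = oclass ys" by (rule ocellsE)
    then show ?thesis using zero by simp
  qed (simp add: cobdry_def)
  then show ?thesis using star_form_in_forms[OF r] by (simp add: closed_forms_def)
qed

lemma ocell_split_face:
  assumes S0: "S0 \<in> OC"
  obtains w r where "r \<in> orderings X (d - 2)" "w # r \<in> orderings X (d - 1)" "S0 = oclass (w # r)"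
proof -
  have s: "orep S0 \<in> orderings X (d - 1)" "oclass (orep S0) = S0" using orep_in_orderings[OF S0] by auto
  then obtain w r where wr: "orep S0 = w # r" using d_ge_2 by (cases "orep S0") (auto simp: orderings_def)
  then have "r \<in> orderings X (d - 2)"
    using s(1) subset_cell[OF simplicial, of "set (w # r)" "set r"] d_ge_2 by (auto simp: orderings_def)
  then show ?thesis using that s wr by simp
qed

lemma deg_le_maxdeg: "c \<in> cells X j \<Longrightarrow> deg X c \<le> maxdeg X j"
  unfolding maxdeg_def using finite_X by (intro Max_ge) (auto simp: cells_def)

lemma inner_ind1_star_form:
  assumes wr: "w # r \<in> orderings X (d - 1)" and S0: "S0 = oclass (w # r)"
  shows "inner_form (ind1 S0) (star_form r) = 1"
proof -
  have o: "S0 \<in> OC" using oclass_in_ocells[OF wr] S0 by simp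
  have c0: "ocell S0 \<in> C" "ocell S0 = set (w # r)"
    using ocell_in_cells[OF o] ocell_oclass[of "w # r"] wr S0 by (auto simp: orderings_def)
  have "ind1 S0 (canon_ocell c) * star_form r (canon_ocell c) / real (deg X c)
      = (if c = ocell S0 then 1 else 0)" if c: "c \<in> C" for c
  proof (cases "c = ocell S0")
    case True
    then have "canon_ocell c = S0 \<or> canon_ocell c = obar S0"
      using ocells_same_ocell[OF o conjunct1[OF canon_ocell_C[OF c]]] canon_ocell_C[OF c] d_ge_2 by simp
    then show ?thesis
      using True c0 star_form_oclass_Cons[OF wr] S0 obar_OC[OF o] deg_pos[OF c] by (auto simp: ind1_def)
  next
    case False
    then have "canon_ocell c \<noteq> S0" "canon_ocell c \<noteq> obar S0" using canon_ocell_C[OF c] obar_OC[OF o] by auto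
    then show ?thesis using False by (simp add: ind1_def)
  qed
  then have "inner_form (ind1 S0) (star_form r) = (\<Sum>c\<in>C. if c = ocell S0 then 1 else 0)"
    unfolding inner_form_def by (intro sum.cong) auto
  then show ?thesis using c0 finite_C by simp
qed

lemma inner_star_form_self_pos:
  assumes r: "r \<in> orderings X (d - 2)" and wr: "w # r \<in> orderings X (d - 1)"
  shows "inner_form (star_form r) (star_form r) > 0"
proof -
  have "set (w # r) \<in> C" using wr by (auto simp: orderings_def cells_def distinct_card)
  then have "star_form r (oclass (w # r)) \<noteq> 0"
    using star_form_oclass_Cons(1)[OF wr] deg_pos by simp
  then have "inner_form (star_form r) (star_form r) \<noteq> 0"
    using inner_form_self_eq_0[OF star_form_in_forms[OF r]] by fastforce
  then show ?thesis using inner_form_nonneg[of "star_form r"] by linarith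
qed

lemma inner_star_form_self_le:
  assumes r: "r \<in> orderings X (d - 2)"
  shows "inner_form (star_form r) (star_form r) \<le> real (maxdeg X (d - 2)) * real (maxdeg X (d - 1))"
proof -
  let ?K = "real (maxdeg X (d - 1))"
  have "star_form r (canon_ocell c) * star_form r (canon_ocell c) / real (deg X c)
      = (if set r \<subseteq> c then real (deg X c) else 0)" if c: "c \<in> C" for c
    using canon_ocell_C[OF c] deg_pos[OF c] by (auto simp: star_form_def)
  then have "inner_form (star_form r) (star_form r) = (\<Sum>c\<in>C. if set r \<subseteq> c then real (deg X c) else 0)"
    unfolding inner_form_def by (intro sum.cong) auto
  also have "\<dots> = (\<Sum>c\<in>{c \<in> C. set r \<subseteq> c}. real (deg X c))"
    using finite_C by (simp add: sum.inter_filter)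
  also have "\<dots> \<le> real (card {c \<in> C. set r \<subseteq> c}) * ?K"
    by (rule sum_bounded_above) (simp add: deg_le_maxdeg)
  also have "{c \<in> C. set r \<subseteq> c} = {t \<in> X. set r \<subseteq> t \<and> card t = card (set r) + 1}"
    using r d_ge_2 by (auto simp: cells_def orderings_def distinct_card)
  then have "card {c \<in> C. set r \<subseteq> c} = deg X (set r)" by (simp add: deg_def)
  also have "real (deg X (set r)) * ?K \<le> real (maxdeg X (d - 2)) * ?K"
    using deg_le_maxdeg r by (intro mult_right_mono) (auto simp: cells_def orderings_def distinct_card)
  finally show ?thesis .
qed

lemma inner_funpow_Aop_closed:
  fixes f z :: "'a list set \<Rightarrow> real"
  assumes f: "f \<in> forms X (d - 1)" and z: "z \<in> closed_forms X d" and p: "p < 1"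
  shows "inner_form ((Aop X d p ^^ n) f) z = top_eigenvalue d p ^ n * inner_form f z"
proof (induction n)
  case (Suc n)
  have zf: "z \<in> forms X (d - 1)" using z by (simp add: closed_forms_def)
  have "inner_form ((Aop X d p ^^ Suc n) f) z = inner_form ((Aop X d p ^^ n) f) (Aop X d p z)"
    using Aop_self_adjoint[OF funpow_Aop_in_forms[OF f] zf] by simp
  also have "\<dots> = top_eigenvalue d p * inner_form ((Aop X d p ^^ n) f) z"
    unfolding top_eigenspace_eq_closed_forms[OF zf p, THEN iffD2, OF z] inner_form_scale_right ..
  finally show ?case using Suc by simp
qed simp

lemma fnorm_Eproc_lower:
  assumes S0: "S0 \<in> OC" and p: "0 \<le> p" "p < 1"
  shows "1 / sqrt (real (maxdeg X (d - 2)) * real (maxdeg X (d - 1))) * top_eigenvalue d p ^ n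
    \<le> fnorm X d (Eproc X d p S0 n)"
proof -
  obtain w r where r: "r \<in> orderings X (d - 2)" and wr: "w # r \<in> orderings X (d - 1)"
    and S0': "S0 = oclass (w # r)" using ocell_split_face[OF S0] .
  let ?E = "Eproc X d p S0 n" and ?z = "star_form r"
  let ?K = "real (maxdeg X (d - 2)) * real (maxdeg X (d - 1))"
  have "inner_form ?E ?z = top_eigenvalue d p ^ n"
    using inner_funpow_Aop_closed[OF ind1_in_forms[OF S0] star_form_closed[OF r] p(2)]
      inner_ind1_star_form[OF wr S0'] by (simp add: Eproc_eq_funpow_Aop[OF S0])
  then have "(top_eigenvalue d p ^ n)\<^sup>2 \<le> inner_form ?E ?E * inner_form ?z ?z"
    using inner_form_Cauchy_Schwarz[of ?E ?z] by simp
  also have "\<dots> \<le> inner_form ?E ?E * ?K"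
    by (rule mult_left_mono[OF inner_star_form_self_le[OF r] inner_form_nonneg])
  finally have "top_eigenvalue d p ^ n \<le> sqrt (inner_form ?E ?E * ?K)"
    by (rule real_le_rsqrt)
  then have "top_eigenvalue d p ^ n \<le> fnorm X d ?E * sqrt ?K"
    by (simp add: fnorm_eq_sqrt_inner_form real_sqrt_mult)
  moreover have "sqrt ?K > 0"
    using inner_star_form_self_pos[OF r wr] inner_star_form_self_le[OF r] by simp
  ultimately have "top_eigenvalue d p ^ n / sqrt ?K \<le> fnorm X d ?E"
    by (simp only: pos_divide_le_eq)
  then show ?thesis by (simp only: times_divide_eq_left mult_1_left)
qed

lemma fnorm_Eproc_upper:
  assumes S0: "S0 \<in> OC" and p: "0 \<le> p" "p < 1"
  shows "fnorm X d (Eproc X d p S0 n) \<le> (max \<bar>2 * p - 1\<bar> (top_eigenvalue d p)) ^ n"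
proof -
  let ?r = "max \<bar>2 * p - 1\<bar> (top_eigenvalue d p)"
  have "inner_form (Eproc X d p S0 n) (Eproc X d p S0 n) \<le> (?r\<^sup>2) ^ n * inner_form (ind1 S0) (ind1 S0)"
    unfolding Eproc_eq_funpow_Aop[OF S0] using funpow_Aop_norm_bound[OF ind1_in_forms[OF S0] p] .
  also have "\<dots> \<le> (?r ^ n)\<^sup>2"
    using inner_ind1_ind1[OF S0] mult_left_mono[of _ 1 "(?r\<^sup>2) ^ n"] by (simp add: power_mult[symmetric] power_mult_distrib mult.commute)
  finally have "sqrt (inner_form (Eproc X d p S0 n) (Eproc X d p S0 n)) \<le> sqrt ((?r ^ n)\<^sup>2)"
    by (rule real_sqrt_le_mono)
  then show ?thesis by (simp add: fnorm_eq_sqrt_inner_form)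
qed

section \<open>Disorientations\<close>

lemma oclass_Cons_opp_face:
  assumes ys: "ys \<in> orderings X d" and x: "x \<in> set ys"
  shows "oclass (x # orep (opp_face ys x)) = oclass ys" "x \<in> link_vertices X (ocell (opp_face ys x))"
proof -
  let ?S = "opp_face ys x"
  have S: "?S \<in> OC" using opp_face_in_OC[OF ys x] .
  have s: "orep ?S \<in> orderings X (d - 1)" "oclass (orep ?S) = ?S"
    using orep_OC[OF S] oclass_orep_OC[OF S] by simp_all
  have ss: "set (orep ?S) = set ys - {x}" using ocell_opp_face_top[OF ys x] orep_ocell[OF S] by simp
  have dy: "distinct ys" "length ys \<ge> 3" using ys d_ge_2 by (auto simp: orderings_def)
  have dz: "distinct (x # orep ?S)" "length (orep ?S) \<ge> 2" using s ss d_ge_2 by (auto simp: orderings_def)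
  have r: "reordering ys (x # orep ?S)" using dz ss dy x by (auto simp: reordering_def)
  have "opp_face (x # orep ?S) x = ?S" using opp_face_Cons_hd[OF dz] s by simp
  then have "even_reordering ys (x # orep ?S)"
    using opp_face_reordering[OF r dy(2) x] obar_OC[OF S] by (cases "even_reordering ys (x # orep ?S)") auto
  then show "oclass (x # orep ?S) = oclass ys"
    using oclass_eq_iff[OF dy(1) dz(1)] r by (simp add: reordering_def)
  show "x \<in> link_vertices X (ocell ?S)"
    using ss orep_ocell[OF S] ys x by (auto simp: link_vertices_def orderings_def insert_absorb)
qed

lemma disorientation_flip:
  "disorientation X d D \<Longrightarrow> xs \<in> orderings X d \<Longrightarrow> oclass (flip xs) \<in> D \<longleftrightarrow> oclass xs \<notin> D"
  unfolding disorientation_def by blast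

lemma disorientation_ind_faces_eq:
  assumes "disorientation X d D" "xs \<in> orderings X d" "ys \<in> orderings X d" "oclass xs \<in> D" "oclass ys \<in> D"
    "set xs \<noteq> set ys" "card (set xs \<inter> set ys) = d" "i < d + 1" "k < d + 1"
    "set (del i xs) = set xs \<inter> set ys" "set (del k ys) = set xs \<inter> set ys"
  shows "ind_face xs i = ind_face ys k"
  using assms unfolding disorientation_def by blast

text \<open>All \<open>d\<close>-cells of a disorientation that contain \<open>S\<close> induce the same orientation on \<open>S\<close>: if
  \<open>[v,S]\<close> and \<open>[w,S]\<close> had different membership, then \<open>[v,S]\<close> and \<open>[a,w,S']\<close> (where
  \<open>S = [a,S']\<close>) would both lie in it and induce opposite orientations on \<open>S\<close>.\<close>

lemma disorientation_Cons_link: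
  assumes D: "disorientation X d D" and S: "S \<in> OC"
    and v: "v \<in> link_vertices X (ocell S)" and w: "w \<in> link_vertices X (ocell S)"
    and vD: "oclass (v # orep S) \<in> D"
  shows "oclass (w # orep S) \<in> D"
proof (rule ccontr)
  assume wD: "oclass (w # orep S) \<notin> D"
  let ?s = "orep S"
  have s: "?s \<in> orderings X (d - 1)" "oclass ?s = S"
    using orep_OC[OF S] oclass_orep_OC[OF S] by simp_all
  have s3: "set ?s = ocell S" by (rule orep_ocell[OF S])
  have "length ?s = d" using s(1) d_ge_2 by (simp add: orderings_def)
  then obtain a s' where as: "?s = a # s'" using d_ge_2 by (cases ?s) simp_all
  have vs: "v \<notin> set ?s" "w \<notin> set ?s" using v w unfolding s3 by (simp_all add: link_vertices_def)
  have "v \<noteq> w"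
  proof
    assume "v = w" then show False using vD wD by simp
  qed
  have xo: "v # ?s \<in> orderings X d" and wo: "w # ?s \<in> orderings X d"
    using Cons_in_orderings[OF s(1), of v] Cons_in_orderings[OF s(1), of w] v w s3 by simp_all
  have yD: "oclass (a # w # s') \<in> D"
    using disorientation_flip[OF D wo] wD as by simp
  have yo: "a # w # s' \<in> orderings X d" using flip_in_orderings[OF wo] as by simp
  have sw: "set (a # w # s') = insert w (set ?s)" using as by auto
  have meet: "set (v # ?s) \<inter> set (a # w # s') = set ?s" "set (v # ?s) \<noteq> set (a # w # s')"
    unfolding sw using vs \<open>v \<noteq> w\<close> by auto
  have "ind_face (v # ?s) 0 = ind_face (a # w # s') 1"
  proof (rule disorientation_ind_faces_eq[OF D xo yo vD yD meet(2)])
    show "card (set (v # ?s) \<inter> set (a # w # s')) = d"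
      unfolding meet(1) using s(1) d_ge_2 by (simp add: orderings_def distinct_card)
    show "(0::nat) < d + 1" "(1::nat) < d + 1" using d_ge_2 by auto
    show "set (del 0 (v # ?s)) = set (v # ?s) \<inter> set (a # w # s')"
      unfolding meet(1) by simp
    show "set (del 1 (a # w # s')) = set (v # ?s) \<inter> set (a # w # s')"
      unfolding meet(1) using as by (simp add: del_def)
  qed
  moreover have "ind_face (v # ?s) 0 = S" "ind_face (a # w # s') 1 = obar S"
    using s as by (simp_all add: ind_face_def del_def)
  ultimately show False using obar_OC[OF S] by simp
qed

definition disor_sign :: "'a list set set \<Rightarrow> 'a list set \<Rightarrow> bool" where
  "disor_sign D S \<longleftrightarrow> (\<exists>v\<in>link_vertices X (ocell S). oclass (v # orep S) \<in> D)"

lemma disor_sign_iff: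
  "disorientation X d D \<Longrightarrow> S \<in> OC \<Longrightarrow> v \<in> link_vertices X (ocell S) \<Longrightarrow>
    disor_sign D S \<longleftrightarrow> oclass (v # orep S) \<in> D"
  unfolding disor_sign_def using disorientation_Cons_link by blast

lemma bdry_disor_form:
  assumes D: "disorientation X d D" and S: "S \<in> OC"
  shows "bdry X d (disor_form X d D) S = (if disor_sign D S then 1 else -1) * real (deg X (ocell S))"
proof -
  have s: "orep S \<in> orderings X (d - 1)" using orep_OC[OF S] .
  have "disor_form X d D (oclass (v # orep S)) = (if disor_sign D S then 1 else -1)"
    if v: "v \<in> link_vertices X (ocell S)" for v
    using disor_sign_iff[OF D S v] oclass_in_ocells[OF Cons_in_orderings[OF s]] v orep_ocell[OF S]
    by (simp add: disor_form_def)
  then have "bdry X d (disor_form X d D) S = (\<Sum>v\<in>link_vertices X (ocell S). if disor_sign D S then 1 else -1)"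
    using S by (simp add: bdry_def link_vertices_def[symmetric])
  then show ?thesis using card_link_vertices[OF ocell_in_cells[OF S]] by simp
qed

lemma disor_sign_opp_face_flip:
  assumes D: "disorientation X d D" and xs: "xs \<in> orderings X d" and x: "x \<in> set xs"
  shows "disor_sign D (opp_face (flip xs) x) \<longleftrightarrow> oclass xs \<notin> D"
proof -
  have fo: "flip xs \<in> orderings X d" and x': "x \<in> set (flip xs)"
    using flip_in_orderings[OF xs] x by auto
  note c = oclass_Cons_opp_face[OF fo x']
  have "disor_sign D (opp_face (flip xs) x) \<longleftrightarrow> oclass (flip xs) \<in> D"
    using disor_sign_iff[OF D opp_face_in_OC[OF fo x'] c(2)] c(1) by simp
  then show ?thesis using disorientation_flip[OF D xs] by simp
qed

lemma disor_sign_nbr: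
  assumes D: "disorientation X d D" and S: "S \<in> OC" and S': "S' \<in> N S"
  shows "disor_sign D S' \<longleftrightarrow> \<not> disor_sign D S"
proof -
  let ?s = "orep S"
  have s: "?s \<in> orderings X (d - 1)" "oclass ?s = S"
    using orep_OC[OF S] oclass_orep_OC[OF S] by simp_all
  have "nbr X d (oclass ?s) S'" using S' s(2) by simp
  then obtain v x where v: "v \<in> link_vertices X (set ?s)" and x: "x \<in> set ?s"
    and S'v: "S' = obar (opp_face (v # ?s) x)"
    by (rule nbr_oclassE[OF s(1)])
  have xo: "v # ?s \<in> orderings X d" using Cons_in_orderings[OF s(1) v] .
  have dx: "distinct (v # ?s)" "length (v # ?s) \<ge> 3" using xo d_ge_2 by (auto simp: orderings_def)
  have "opp_face (flip (v # ?s)) x = S'"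
    using opp_face_reordering[OF conjunct1[OF odd_reordering_flip] dx(2)] odd_reordering_flip[OF dx(1)] dx x S'v
    by simp
  moreover have "disor_sign D (opp_face (flip (v # ?s)) x) \<longleftrightarrow> oclass (v # ?s) \<notin> D"
    using disor_sign_opp_face_flip[OF D xo] x by simp
  moreover have "disor_sign D S \<longleftrightarrow> oclass (v # ?s) \<in> D"
    using disor_sign_iff[OF D S] v orep_ocell[OF S] by simp
  ultimately show ?thesis by simp
qed

lemma disor_sign_obar:
  assumes D: "disorientation X d D" and S: "S \<in> OC"
  shows "disor_sign D (obar S) \<longleftrightarrow> \<not> disor_sign D S"
proof -
  obtain v where v: "v \<in> link_vertices X (ocell S)"
    using link_vertices_nonempty[OF ocell_in_cells[OF S]] by blast
  have s: "orep S \<in> orderings X (d - 1)" "oclass (orep S) = S"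
    using orep_OC[OF S] oclass_orep_OC[OF S] by simp_all
  have xo: "v # orep S \<in> orderings X d" using Cons_in_orderings[OF s(1)] v orep_ocell[OF S] by simp
  have dx: "distinct (v # orep S)" "length (v # orep S) \<ge> 3" using xo d_ge_2 by (auto simp: orderings_def)
  have "opp_face (flip (v # orep S)) v = obar S"
    using opp_face_reordering[OF conjunct1[OF odd_reordering_flip] dx(2)] odd_reordering_flip[OF dx(1)] dx
      opp_face_Cons_hd[of v "orep S"] s by simp
  then show ?thesis
    using disor_sign_opp_face_flip[OF D xo, of v] disor_sign_iff[OF D S v] by simp
qed

lemma Aop_bdry_disor_form:
  assumes D: "disorientation X d D" and S0: "S0 \<in> OC"
  shows "bdry X d (disor_form X d D) \<in> forms X (d - 1)"
    and "bdry X d (disor_form X d D) \<noteq> (\<lambda>_. 0)"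
    and "Aop X d p (bdry X d (disor_form X d D)) = (\<lambda>S. (2 * p - 1) * bdry X d (disor_form X d D) S)"
proof -
  let ?g = "bdry X d (disor_form X d D)"
  have g0: "?g S = 0" if "S \<notin> OC" for S using that by (simp add: bdry_def)
  have "?g (obar S) = - ?g S" if S: "S \<in> OC" for S
    using bdry_disor_form[OF D S] bdry_disor_form[OF D conjunct1[OF obar_OC[OF S]]]
      disor_sign_obar[OF D S] obar_OC[OF S] by simp
  then show "?g \<in> forms X (d - 1)" using g0 by (simp add: forms_def)
  have "?g S0 \<noteq> 0"
    using bdry_disor_form[OF D S0] deg_pos[OF ocell_in_cells[OF S0]] by simp
  then show "?g \<noteq> (\<lambda>_. 0)" by auto
  have "Aop X d p ?g S = (2 * p - 1) * ?g S" for S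
  proof (cases "S \<in> OC")
    case True
    define sg where "sg = (if disor_sign D S then 1 else -1 :: real)"
    have "?g S' / real (deg X (ocell S')) = - sg" if S': "S' \<in> N S" for S'
      using bdry_disor_form[OF D] disor_sign_nbr[OF D True S'] deg_pos[OF ocell_in_cells] nbr_OC S'
      unfolding sg_def by auto
    then have "nbr_sum ?g S = - sg * real (d * deg X (ocell S))"
      unfolding nbr_sum_def using card_nbr[OF True] by simp
    then show ?thesis
      using True bdry_disor_form[OF D True] d_ge_2 unfolding sg_def by (simp add: Aop_real field_simps)
  qed (simp add: Aop_real g0)
  then show "Aop X d p ?g = (\<lambda>S. (2 * p - 1) * ?g S)" ..
qed

end

theorem mainTheorem2:
  fixes X :: "'a set set" and d :: nat and p :: real and S0 :: "'a list set"
  assumes "d \<ge> 2" and "0 \<le> p" and "p < 1"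
    and "finite X" and "is_d_complex X d" and "uniform X d"
    and "S0 \<in> ocells X (d - 1)"
  shows
    "(\<forall>f \<in> forms X (d - 1). Aop X d p f =
        (\<lambda>S. ((p * (real d - 1) + 1) / real d) * f S - ((1 - p) / real d) * Lup X d f S))
     \<and> Eproc X d p S0 0 = ind1 S0
     \<and> (\<forall>n. Eproc X d p S0 n = (Aop X d p ^^ n) (Eproc X d p S0 0)
           \<and> Eproc X d p S0 n = (Aop X d p ^^ n) (ind1 S0))
     \<and> (\<forall>(\<mu>::complex) f. f \<in> forms X (d - 1) \<and> f \<noteq> (\<lambda>_. 0) \<and> Aop X d p f = (\<lambda>S. \<mu> * f S) \<longrightarrow>
        Im \<mu> = 0 \<and> 2 * p - 1 \<le> Re \<mu> \<and> Re \<mu> \<le> (p * (real d - 1) + 1) / real d)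
     \<and> (\<exists>f \<in> forms X (d - 1). f \<noteq> (\<lambda>_. 0) \<and>
          Aop X d p f = (\<lambda>S. ((p * (real d - 1) + 1) / real d) * f S))
     \<and> {f \<in> forms X (d - 1). Aop X d p f = (\<lambda>S. ((p * (real d - 1) + 1) / real d) * f S)}
          = closed_forms X d
     \<and> (connected_d1 X d \<and> disorientable X d \<longrightarrow>
          (\<forall>D. disorientation X d D \<longrightarrow>
             (let g = bdry X d (disor_form X d D) in
               g \<in> forms X (d - 1) \<and> g \<noteq> (\<lambda>_. 0) \<and>
               Aop X d p g = (\<lambda>S. (2 * p - 1) * g S))))
     \<and> (\<forall>n. 1 / sqrt (real (maxdeg X (d - 2)) * real (maxdeg X (d - 1)))
            * ((p * (real d - 1) + 1) / real d) ^ n \<le> fnorm X d (Eproc X d p S0 n)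
         \<and> fnorm X d (Eproc X d p S0 n)
            \<le> (max \<bar>2 * p - 1\<bar> ((p * (real d - 1) + 1) / real d)) ^ n)"
proof -
  interpret uniform_complex X d
    using assms by unfold_locales (simp_all add: is_d_complex_def)
  have p: "0 \<le> p" "p < 1" and S0: "S0 \<in> OC" using assms by simp_all
  obtain w r where r: "r \<in> orderings X (d - 2)" and wr: "w # r \<in> orderings X (d - 1)"
    using ocell_split_face[OF S0] .
  have "star_form r \<noteq> (\<lambda>_. 0)"
    using inner_star_form_self_pos[OF r wr] by (auto simp: inner_form_def)
  then have "\<exists>f \<in> forms X (d - 1). f \<noteq> (\<lambda>_. 0) \<and> Aop X d p f = (\<lambda>S. top_eigenvalue d p * f S)"
    using star_form_in_forms[OF r] star_form_closed[OF r] top_eigenspace_eq_closed_forms[OF _ p(2)] by blast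
  moreover have "{f \<in> forms X (d - 1). Aop X d p f = (\<lambda>S. top_eigenvalue d p * f S)} = closed_forms X d"
    using top_eigenspace_eq_closed_forms[OF _ p(2)] by (auto simp: closed_forms_def)
  moreover have "Eproc X d p S0 n = (Aop X d p ^^ n) (Eproc X d p S0 0)" for n
    using Eproc_eq_funpow_Aop[OF S0] Eproc_0[OF S0] by simp
  \<comment> \<open>Every disorientation gives a \<open>(2p-1)\<close>-eigenform.\<close>
  ultimately show ?thesis
    unfolding Let_def
    using Aop_eq_Lup Eproc_0[OF S0] Eproc_eq_funpow_Aop[OF S0] Aop_eigenvalue_bounds[OF _ _ _ p]
      Aop_bdry_disor_form[OF _ S0] fnorm_Eproc_lower[OF S0 p] fnorm_Eproc_upper[OF S0 p]
    by blast
qed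

end
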